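(* For every irrational $\alpha\in(0,1)$, the sequence $(P_{q_n(\alpha)}(\alpha))_{n\in\mathbb N}$ has a convergent subsequence.
   Context: $P_N(\alpha)=\prod_{r=1}^N|2\sin(\pi r\alpha)|$, and $q_n(\alpha)$ is the $n$th best approximation (convergent) denominator of $\alpha$. *)

theory Defs
  imports "HOL-Analysis.Analysis"
begin

definition sudler :: "nat \<Rightarrow> real \<Rightarrow> real" where
  "sudler N \<alpha> = (\<Prod>r = 1..N. \<bar>2 * sin (pi * real r * \<alpha>)\<bar>)"

text \<open>Gauss map and continued fraction digits: alpha = [0; a_1, a_2, ...].\<close>
definition gauss_map :: "real \<Rightarrow> real" where
  "gauss_map x = frac (1 / x)"

definition cf_digit :: "real \<Rightarrow> nat \<Rightarrow> nat" where
  "cf_digit \<alpha> n = nat \<lfloor>1 / ((gauss_map ^^ (n - 1)) \<alpha>)\<rfloor>"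

fun cf_denom :: "real \<Rightarrow> nat \<Rightarrow> nat" where
  "cf_denom \<alpha> 0 = 1"
| "cf_denom \<alpha> (Suc 0) = cf_digit \<alpha> 1"
| "cf_denom \<alpha> (Suc (Suc n)) = cf_digit \<alpha> (n + 2) * cf_denom \<alpha> (Suc n) + cf_denom \<alpha> n"

end

theory Submission
  imports Defs "HOL-Computational_Algebra.Fundamental_Theorem_Algebra"
begin

text \<open>
  Let p/q = p_(m+1)/q_(m+1) be a convergent of \<alpha>, s = q_m and \<tau> = |q \<alpha> - p| < 1/q_(m+2).
  Since j \<mapsto> j s mod q permutes {1..<q}, each factor |2 sin (\<pi> r \<alpha>)| with 0 < r < q equals
  2 sin (\<pi> (j/q - r \<tau>/q)) for r = j s mod q, a small perturbation of 2 sin (\<pi> j/q).  As the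
  product of the 2 sin (\<pi> j/q) is q, a first-order expansion of ln sin and the partial-fraction
  approximation of cot give ln P_q(\<alpha>) \<le> C + 2 \<tau> q |G(s/q)|, where G(x) = \<Sum>_(j<q) saw(j x)/j
  is a weighted sawtooth sum.  Counting lattice points and Stirling's formula yield the
  reciprocity law |G(s/q) + (s/q) G(t/s)| \<le> C + ln (q/s) for q = a s + t; iterated along the
  continued fraction it bounds q_(m+1) |G| by C \<Sum>_(i\<le>m+1) q_i a_i.  For the infinitely many m at
  which a_(m+2) dominates all earlier digits up to a fixed factor (every m if the digits are
  bounded, the record indices otherwise) this is O(q_(m+2)), so P_(q_(m+1))(\<alpha>) stays bounded
  along them, and Bolzano-Weierstrass applies.
\<close>

section \<open>Harmonic numbers and Stirling's formula\<close>

lemma harm_ln_euler_mascheroni_approx: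
  assumes "m \<ge> (1::nat)"
  shows "\<bar>harm m - ln (real m) - euler_mascheroni - 1 / (2 * real m)\<bar> \<le> 1 / (2 * real m ^ 2)"
proof -
  have m: "real m \<ge> 1" using assms by simp
  have lo: "euler_mascheroni \<ge> harm m - ln (real m + 1) + 1 / (2 * (real m + 1))"
    using euler_mascheroni_lower[of "m - 1"] assms by (simp add: Suc_diff_le add.commute)
  have up: "euler_mascheroni \<le> harm m - ln (real m + 1) + 1 / (2 * real m)"
    using euler_mascheroni_upper[of "m - 1"] assms by (simp add: Suc_diff_le add.commute)
  have "ln (real m + 1) - ln (real m) \<le> (inverse (real m) + inverse (real m + 1)) / 2"
    using ln_inverse_approx_le[of "real m" 1] m by simp
  also have "\<dots> = 1 / (2 * (real m + 1)) + 1 / (2 * real m)"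
    using m by (simp add: field_split_simps)
  finally have ln_up: "ln (real m + 1) - ln (real m) \<le> 1 / (2 * (real m + 1)) + 1 / (2 * real m)" .
  have ln_lo: "ln (real m + 1) - ln (real m) \<ge> 2 / (2 * real m + 1)"
    using ln_inverse_approx_ge[of "real m" "real m + 1"] m by simp
  have "2 / (2 * real m + 1) - 1 / real m = - (1 / (real m * (2 * real m + 1)))"
    using m by (simp add: field_split_simps)
  moreover have "1 / (real m * (2 * real m + 1)) \<le> 1 / (2 * real m ^ 2)"
  proof (rule frac_le)
    show "2 * real m ^ 2 \<le> real m * (2 * real m + 1)"
      using m by (simp add: power2_eq_square algebra_simps)
  qed (use m in auto)
  ultimately show ?thesis
    using lo up ln_up ln_lo by (intro abs_leI) linarith+
qed

lemma harm_le_ln_plus_1: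
  assumes "n \<ge> 1"
  shows "harm n \<le> ln (real n) + 1"
  using decseq_harm_diff_ln[unfolded decseq_def, rule_format, of 0 "n - 1"] assms
  by (simp add: harm_Suc harm_def)

definition stirling_remainder :: "nat \<Rightarrow> real" where
  "stirling_remainder K = ln (fact K) - (real K + 1/2) * ln (real K) + real K"

lemma stirling_remainder_bounds:
  assumes "K \<ge> 1"
  shows "3/4 \<le> stirling_remainder K" "stirling_remainder K \<le> 1"
proof -
  have "3/4 + 1/(4 * real K) \<le> stirling_remainder K \<and> stirling_remainder K \<le> 1"
    using assms
  proof (induction K rule: dec_induct)
    case base
    then show ?case by (simp add: stirling_remainder_def)
  next
    case (step K)
    have K: "real K \<ge> 1" using step by simp
    have rec: "stirling_remainder (Suc K) =
        stirling_remainder K - (real K + 1/2) * (ln (real K + 1) - ln (real K)) + 1"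
    proof -
      have "ln (fact (Suc K)) = ln (fact K) + ln (real K + 1)"
        by (simp add: ln_mult add.commute)
      then show ?thesis unfolding stirling_remainder_def by (simp add: algebra_simps)
    qed
    have "ln (real K + 1) - ln (real K) \<le> (inverse (real K) + inverse (real K + 1)) / 2"
      using ln_inverse_approx_le[of "real K" 1] K by simp
    then have "(real K + 1/2) * (ln (real K + 1) - ln (real K))
        \<le> (real K + 1/2) * ((inverse (real K) + inverse (real K + 1)) / 2)"
      using K by (intro mult_left_mono) auto
    also have "\<dots> = 1 + 1/(4 * real K) - 1/(4 * (real K + 1))"
      using K by (simp add: field_split_simps)
    finally have up: "(real K + 1/2) * (ln (real K + 1) - ln (real K))
        \<le> 1 + 1/(4 * real K) - 1/(4 * (real K + 1))" .
    have "ln (real K + 1) - ln (real K) \<ge> 2 / (2 * real K + 1)"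
      using ln_inverse_approx_ge[of "real K" "real K + 1"] K by simp
    from mult_left_mono[OF this, of "real K + 1/2"]
    have lo: "(real K + 1/2) * (ln (real K + 1) - ln (real K)) \<ge> 1"
      using K by (simp add: field_simps)
    show ?case using step.IH rec up lo by (simp add: add.commute)
  qed
  moreover have "0 \<le> 1 / (4 * real K)" by simp
  ultimately show "3/4 \<le> stirling_remainder K" "stirling_remainder K \<le> 1"
    by linarith+
qed

lemma ln_fact_eq_sum_ln: "ln (fact K :: real) = (\<Sum>k=1..K. ln (real k))"
  by (induction K) (simp_all add: ln_mult)

lemma harm_diff_eq_sum:
  assumes "m \<le> N"
  shows "harm N - harm m = (\<Sum>j\<in>{m<..N}. 1 / real j)"
  using assms
proof (induction N rule: dec_induct)
  case (step N)
  have "{m<..Suc N} = insert (Suc N) {m<..N}" using step by auto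
  then show ?case using step by (simp add: harm_Suc divide_inverse)
qed simp

lemma sum_inverse_squares_le_2: "(\<Sum>k=1..K. 1 / real k ^ 2) \<le> 2"
proof -
  have "(\<Sum>k=1..K. 1 / real k ^ 2) \<le> 2 - 1 / real (max 1 K)"
  proof (induction K)
    case (Suc K)
    show ?case
    proof (cases "K = 0")
      case False
      then have K: "real K \<ge> 1" by simp
      have "1 / (real K + 1)^2 \<le> 1 / (real K * (real K + 1))"
        unfolding power2_eq_square using K by (intro divide_left_mono mult_right_mono) auto
      also have "\<dots> = 1 / real K - 1 / (real K + 1)"
        using K by (simp add: field_simps)
      finally show ?thesis using Suc False by (simp add: max_def add.commute)
    qed simp
  qed simp
  then show ?thesis by (rule order_trans) simp
qed

section \<open>Sawtooth sums and their reciprocity law\<close>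

text \<open>Unlike the usual sawtooth function, \<open>saw\<close> takes the value \<open>-1/2\<close> (not \<open>0\<close>) at integers;
  hence the hypothesis of \<open>saw_minus\<close>.\<close>

definition saw :: "real \<Rightarrow> real" where
  "saw y = frac y - 1/2"

definition saw_sum :: "real \<Rightarrow> nat \<Rightarrow> real" where
  "saw_sum x N = (\<Sum>j=1..N. saw (real j * x) / real j)"

lemma saw_add_of_nat [simp]: "saw (y + real n) = saw y"
  unfolding saw_def by (simp add: frac_def)

lemma saw_minus:
  assumes "y \<notin> \<int>"
  shows "saw (- y) = - saw y"
  using assms unfolding saw_def by (simp add: frac_neg)

lemma saw_mult_of_nat_div:
  assumes "q \<ge> 1"
  shows "saw (real j * (real s / real q)) = real (j * s mod q) / real q - 1/2"
proof -
  have "real j * (real s / real q) = real (j * s) / real q" by simp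
  moreover have "\<lfloor>real (j * s) / real q\<rfloor> = int (j * s div q)" by (rule floor_divide_of_nat_eq)
  moreover have "real (j * s) = real q * real (j * s div q) + real (j * s mod q)"
    by (metis div_mult_mod_eq of_nat_add of_nat_mult mult.commute)
  ultimately show ?thesis unfolding saw_def frac_def using assms by (simp add: field_simps)
qed

lemma abs_saw_le: "\<bar>saw y\<bar> \<le> 1/2"
  using frac_ge_0[of y] frac_lt_1[of y] unfolding saw_def by (intro abs_leI) linarith+

lemma harm_floor_approx:
  assumes x: "x \<ge> 1"
  shows "\<bar>harm (nat \<lfloor>x\<rfloor>) - (ln x + euler_mascheroni - saw x / x)\<bar> \<le> 5 / x^2"
proof -
  define m where "m = nat \<lfloor>x\<rfloor>"
  have mx: "real m \<le> x" "x < real m + 1" and m1: "m \<ge> 1"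
    unfolding m_def using x by linarith+
  define A where "A = harm m - ln (real m) - euler_mascheroni - 1 / (2 * real m)"
  have A: "\<bar>A\<bar> \<le> 1 / (2 * real m ^ 2)" unfolding A_def by (rule harm_ln_euler_mascheroni_approx[OF m1])
  have mpos: "real m \<ge> 1" using m1 by simp
  have xpos: "x > 0" using x by linarith
  have x2m: "x \<le> 2 * real m" using mx mpos by linarith
  define u where "u = (x - real m) / x"
  have u0: "0 \<le> u" and uh: "u \<le> 1/2"
    unfolding u_def using mx x2m xpos by (auto simp: field_simps)
  have ux: "u \<le> 1 / x" unfolding u_def using mx xpos by (simp add: divide_right_mono)
  have lnm: "ln (real m) = ln x + ln (1 - u)"
  proof -
    have "real m = x * (1 - u)" unfolding u_def using xpos by (simp add: field_simps)
    then show ?thesis using xpos uh by (simp add: ln_mult)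
  qed
  have l1: "ln (1 - u) \<ge> - u - 2 * u^2" using ln_one_minus_pos_lower_bound[OF u0 uh] by simp
  have l2: "ln (1 - u) \<le> - u" using ln_le_minus_one[of "1 - u"] uh by simp
  have u2: "u^2 \<le> 1 / x^2"
    using power_mono[OF ux u0, of 2] by (simp add: power_divide)
  have d1: "0 \<le> 1 / (2 * real m) - 1 / (2 * x)"
    using mx mpos by (simp add: field_simps)
  have d2: "1 / (2 * real m) - 1 / (2 * x) \<le> 1 / x^2"
  proof -
    have "1 / (2 * real m) - 1 / (2 * x) = (x - real m) / (2 * real m * x)"
      using mpos xpos by (simp add: field_simps)
    also have "\<dots> \<le> 1 / (2 * real m * x)"
      using mx mpos xpos by (intro divide_right_mono) auto
    also have "\<dots> \<le> 1 / (x * x)"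
      using x2m xpos mpos by (intro divide_left_mono) (auto simp: mult_right_mono)
    finally show ?thesis by (simp add: power2_eq_square)
  qed
  have a2: "1 / (2 * real m ^ 2) \<le> 2 / x^2"
  proof -
    have "x^2 \<le> (2 * real m)^2" using x2m xpos by (intro power_mono) auto
    then show ?thesis using xpos mpos by (simp add: field_simps)
  qed
  have sawx: "saw x = x - real m - 1/2"
    unfolding saw_def frac_def m_def using x by simp
  have "harm m - (ln x + euler_mascheroni - saw x / x) =
        (ln (1 - u) + u) + (1 / (2 * real m) - 1 / (2 * x)) + A"
    unfolding A_def sawx using lnm xpos by (simp add: u_def field_simps)
  then show ?thesis unfolding m_def[symmetric] using A a2 d1 d2 l1 l2 u2 by (simp add: abs_le_iff)
qed

lemma sum_inverse_above_div_eq: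
  fixes s k q N :: nat
  assumes s: "s \<ge> 1" and ndvd: "\<not> s dvd k * q" and le: "k * q div s \<le> N"
  shows "(\<Sum>j=1..N. if k * q \<le> j * s then 1 / real j else 0) = harm N - harm (k * q div s)"
proof -
  define m where "m = k * q div s"
  have r: "0 < k * q mod s" "k * q mod s < s" using ndvd s by (auto simp: dvd_eq_mod_eq_0)
  have dm: "k * q = m * s + k * q mod s" by (simp add: m_def)
  have iff: "k * q \<le> j * s \<longleftrightarrow> m < j" for j
  proof
    assume "k * q \<le> j * s"
    then have "m * s < j * s" using dm r by linarith
    then show "m < j" by simp
  next
    assume "m < j"
    then have "Suc m * s \<le> j * s" by (intro mult_le_mono1) simp
    then show "k * q \<le> j * s" using dm r by simp
  qed
  have "(\<Sum>j=1..N. if k * q \<le> j * s then 1 / real j else 0) = (\<Sum>j\<in>{j\<in>{1..N}. m < j}. 1 / real j)"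
    using sum.inter_filter[of "{1..N}" "\<lambda>j. 1 / real j" "\<lambda>j. m < j"] by (simp add: iff)
  also have "{j\<in>{1..N}. m < j} = {m<..N}" by auto
  finally show ?thesis using harm_diff_eq_sum[of m N] le by (simp add: m_def)
qed

lemma sum_quotient_div_eq_sum_harm:
  fixes s q N :: nat
  assumes s: "s \<ge> 1" and cop: "coprime s q" and N: "N < q"
  shows "(\<Sum>j=1..N. real (j * s div q) / real j) =
         (\<Sum>k=1..N * s div q. harm N - harm (k * q div s))"
proof -
  define K where "K = N * s div q"
  have q: "q > 0" using N by simp
  have count: "real (j * s div q) = (\<Sum>k=1..K. if k * q \<le> j * s then 1 else 0)" if "j \<le> N" for j
  proof -
    have "j * s div q \<le> K" unfolding K_def using that by (intro div_le_mono) simp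
    have iff: "k * q \<le> j * s \<longleftrightarrow> k \<le> j * s div q" for k
      using less_eq_div_iff_mult_less_eq[OF q, of k "j * s"] by simp
    have "{k\<in>{1..K}. k * q \<le> j * s} = {1..j * s div q}"
      using \<open>j * s div q \<le> K\<close> by (auto simp: iff)
    then show ?thesis
      using sum.inter_filter[of "{1..K}" "\<lambda>_. 1::real" "\<lambda>k. k * q \<le> j * s"] by simp
  qed
  have tail: "(\<Sum>j=1..N. if k * q \<le> j * s then 1 / real j else 0) = harm N - harm (k * q div s)"
    if k: "k \<in> {1..K}" for k
  proof (rule sum_inverse_above_div_eq[OF s])
    have "K < s" unfolding K_def using q N s by (simp add: div_less_iff_less_mult)
    show "\<not> s dvd k * q"
    proof
      assume "s dvd k * q"
      then have "s dvd k" using cop by (simp add: coprime_dvd_mult_left_iff)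
      then show False using k \<open>K < s\<close> by (auto dest: dvd_imp_le)
    qed
    have "k * q \<le> K * q" using k by simp
    also have "K * q \<le> N * s" unfolding K_def by simp
    finally have "k * q div s \<le> N * s div s" by (rule div_le_mono)
    then show "k * q div s \<le> N" using s by simp
  qed
  have "(\<Sum>j=1..N. real (j * s div q) / real j) =
        (\<Sum>j=1..N. \<Sum>k=1..K. (if k * q \<le> j * s then 1 / real j else 0))"
    by (intro sum.cong refl) (auto simp: count sum_divide_distrib intro!: sum.cong)
  also have "\<dots> = (\<Sum>k=1..K. \<Sum>j=1..N. (if k * q \<le> j * s then 1 / real j else 0))"
    by (rule sum.swap)
  also have "\<dots> = (\<Sum>k=1..K. harm N - harm (k * q div s))"
    by (intro sum.cong refl tail)
  finally show ?thesis by (simp add: K_def)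
qed

lemma saw_sum_rational_eq:
  fixes s q N :: nat
  assumes s: "s \<ge> 1" and cop: "coprime s q" and N: "N < q"
  shows "saw_sum (real s / real q) N = real N * real s / real q - (real (N * s div q) + 1/2) * harm N
           + (\<Sum>k=1..N * s div q. harm (k * q div s))"
proof -
  have q: "q \<ge> 1" using N by simp
  have summand: "saw (real j * (real s / real q)) / real j =
      real s / real q - real (j * s div q) / real j - 1/2 * (1 / real j)" if "j \<ge> 1" for j
  proof -
    have "real j * (real s / real q) = real (j * s) / real q" by simp
    moreover have "\<lfloor>real (j * s) / real q\<rfloor> = int (j * s div q)" by (rule floor_divide_of_nat_eq)
    ultimately have "saw (real j * (real s / real q)) = real j * real s / real q - real (j * s div q) - 1/2"
      unfolding saw_def frac_def by simp
    then show ?thesis using that by (simp add: diff_divide_distrib)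
  qed
  have harm: "(\<Sum>j=1..N. 1 / real j) = harm N" by (simp add: harm_def divide_inverse)
  have "saw_sum (real s / real q) N =
      (\<Sum>j=1..N. real s / real q - real (j * s div q) / real j - 1/2 * (1 / real j))"
    unfolding saw_sum_def by (intro sum.cong refl summand) simp
  also have "\<dots> = (\<Sum>j=1..N. real s / real q)
      - (\<Sum>j=1..N. real (j * s div q) / real j) - 1/2 * (\<Sum>j=1..N. 1 / real j)"
    by (simp only: sum_subtractf sum_distrib_left)
  also have "(\<Sum>j=1..N. real (j * s div q) / real j) =
      real (N * s div q) * harm N - (\<Sum>k=1..N * s div q. harm (k * q div s))"
    unfolding sum_quotient_div_eq_sum_harm[OF s cop N] by (simp add: sum_subtractf)
  finally show ?thesis unfolding harm by (simp add: algebra_simps)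
qed

lemma mult_ln_ratio_le:
  fixes x y :: real
  assumes "0 < x" "0 < y"
  shows "y * (ln x - ln y) \<le> x - y"
proof -
  have "ln (x / y) \<le> x / y - 1" using assms by (intro ln_le_minus_one) simp
  then have "y * ln (x / y) \<le> x - y" using assms by (simp add: field_simps)
  then show ?thesis using assms by (simp add: ln_div)
qed

text \<open>With \<open>K = \<lfloor>N / \<rho>\<rfloor>\<close>, the following quantity is what remains of
  \<open>saw_sum_rational_eq\<close> once each \<open>harm (k q div s)\<close> is replaced by \<open>ln k + ln \<rho> + \<gamma>\<close>;
  it is bounded using Stirling's formula.\<close>

lemma main_term_bound_small:
  fixes N :: nat and \<rho> :: real
  assumes \<rho>: "\<rho> \<ge> 1" and N: "real N < \<rho>"
  shows "\<bar>real N / \<rho> - harm N / 2\<bar> \<le> 1 + ln \<rho>"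
proof -
  have "harm N \<le> 1 + ln \<rho>"
  proof (cases "N = 0")
    case False
    then have "ln (real N) \<le> ln \<rho>" using N by simp
    then show ?thesis using harm_le_ln_plus_1[of N] False by simp
  qed (use \<rho> in \<open>simp add: harm_def\<close>)
  moreover have "0 \<le> real N / \<rho>" "real N / \<rho> < 1" using N \<rho> by auto
  ultimately show ?thesis
    using harm_nonneg[of N, where 'a=real] ln_ge_zero[OF \<rho>] by (intro abs_leI) linarith+
qed

lemma main_term_bound_large:
  fixes N K :: nat and \<rho> :: real
  assumes \<rho>: "\<rho> \<ge> 1" and K1: "K \<ge> 1"
    and K_le: "real K \<le> real N / \<rho>" and K_gt: "real N / \<rho> < real K + 1"
  shows "\<bar>real N / \<rho> - (real K + 1/2) * harm N + real K * ln \<rho> + ln (fact K)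
           + real K * euler_mascheroni\<bar> \<le> 4 + ln \<rho>"
proof -
  define X where "X = real N / \<rho>"
  define \<gamma> :: real where "\<gamma> = euler_mascheroni"
  define A where "A = harm N - ln (real N) - \<gamma> - 1 / (2 * real N)"
  have X_le_N: "X \<le> real N"
    unfolding X_def using \<rho> divide_left_mono[of 1 \<rho> "real N"] by simp
  have K_le_X: "real K \<le> X" using K_le unfolding X_def .
  have K1': "real K \<ge> 1" using K1 by simp
  have X_pos: "X > 0" and K_le_N: "real K \<le> real N" using K_le_X K1' X_le_N by linarith+
  then have N1: "N \<ge> 1" using K1 by simp
  have "\<bar>A\<bar> \<le> 1 / (2 * real N ^ 2)" unfolding A_def \<gamma>_def by (rule harm_ln_euler_mascheroni_approx[OF N1])
  moreover have "1 / (2 * real N ^ 2) \<le> 1 / (2 * real N)"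
    using N1 by (simp add: field_simps power2_eq_square)
  ultimately have "(real K + 1/2) * \<bar>1 / (2 * real N) + A\<bar> \<le> (real K + 1/2) * (1 / real N)"
    using K1 by (intro mult_left_mono) (auto simp: abs_le_iff)
  also have "\<dots> \<le> 3/2" using K_le_N N1 by (simp add: field_simps)
  finally have harm_error: "\<bar>(real K + 1/2) * (1 / (2 * real N) + A)\<bar> \<le> 3/2"
    using K1 by (simp add: abs_mult)
  have "real N < (real K + 1) * \<rho>" using K_gt \<rho> by (simp add: field_simps)
  also have "\<dots> \<le> 2 * real K * \<rho>" using K1 \<rho> by (intro mult_right_mono) auto
  finally have "ln (real N) \<le> ln 2 + ln (real K) + ln \<rho>"
    using N1 K1 \<rho> ln_mono[of "real N" "2 * real K * \<rho>"] by (simp add: ln_mult)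
  then have log_ratio_N: "0 \<le> ln (real N) - ln (real K)" "ln (real N) - ln (real K) \<le> 1 + ln \<rho>"
    using ln_le_minus_one[of 2] K_le_N K1 by simp_all
  have log_ratio_X: "0 \<le> real K * (ln X - ln (real K))" "real K * (ln X - ln (real K)) \<le> X - real K"
    using mult_ln_ratio_le[OF X_pos] K_le_X K1 by simp_all
  have "real N / \<rho> - (real K + 1/2) * harm N + real K * ln \<rho> + ln (fact K) + real K * euler_mascheroni
       = (X - real K) - real K * (ln X - ln (real K)) - (1/2) * (ln (real N) - ln (real K)) - \<gamma> / 2
         - (real K + 1/2) * (1 / (2 * real N) + A) + stirling_remainder K"
  proof -
    have ln_\<rho>: "ln \<rho> = ln (real N) - ln X" unfolding X_def using N1 \<rho> by (simp add: ln_div)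
    show ?thesis
      unfolding A_def stirling_remainder_def X_def[symmetric] \<gamma>_def[symmetric] ln_\<rho>
      by (simp add: algebra_simps)
  qed
  moreover have "\<bar>d - b1 - (1/2) * b2 - g / 2 - b3 + st\<bar> \<le> 4 + ln \<rho>"
    if "0 \<le> d" "d < 1" "0 \<le> b1" "b1 \<le> d" "0 \<le> b2" "b2 \<le> 1 + ln \<rho>" "\<bar>b3\<bar> \<le> 3/2"
      "3/4 \<le> st" "st \<le> 1" "0 \<le> g" "g \<le> 1" for d b1 b2 b3 st g :: real
    using that ln_ge_zero[OF \<rho>] by (auto simp: abs_le_iff)
  moreover have "0 \<le> \<gamma>" "\<gamma> \<le> 1"
    unfolding \<gamma>_def using euler_mascheroni_pos euler_mascheroni_less_13_over_22 by auto
  moreover have "0 \<le> X - real K" "X - real K < 1" using K_le K_gt unfolding X_def by auto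
  ultimately show ?thesis
    using log_ratio_X log_ratio_N harm_error stirling_remainder_bounds[OF K1] by simp
qed

lemma main_term_bound:
  fixes N K :: nat and \<rho> :: real
  assumes \<rho>: "\<rho> \<ge> 1" and K_le: "real K \<le> real N / \<rho>" and K_gt: "real N / \<rho> < real K + 1"
  shows "\<bar>real N / \<rho> - (real K + 1/2) * harm N + real K * ln \<rho> + ln (fact K)
           + real K * euler_mascheroni\<bar> \<le> 4 + ln \<rho>"
proof (cases "K = 0")
  case True
  then have "real N < \<rho>" using K_gt \<rho> by (simp add: field_simps)
  then show ?thesis using main_term_bound_small[OF \<rho>] True by fastforce
qed (use main_term_bound_large[OF \<rho> _ K_le K_gt] in simp)

lemma harm_div_approx:
  fixes s q t a k :: nat
  assumes s: "s \<ge> 1" and q: "q = a * s + t" "s \<le> q" and k: "k \<ge> 1"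
  shows "\<bar>harm (k * q div s) - (ln (real k) + ln (real q / real s) + euler_mascheroni
            - (real s / real q) * (saw (real k * (real t / real s)) / real k))\<bar> \<le> 5 / real k ^ 2"
proof -
  define x where "x = real (k * q) / real s"
  have s_pos: "real s > 0" and q_pos: "real q > 0" and k_pos: "real k \<ge> 1"
    using s q(2) k by auto
  have x_ge_k: "x \<ge> real k"
    unfolding x_def using q(2) k_pos s_pos by (simp add: field_simps mult_left_mono)
  have floor_x: "nat \<lfloor>x\<rfloor> = k * q div s"
    unfolding x_def floor_divide_of_nat_eq by simp
  have "x = real k * (real t / real s) + real (k * a)"
    unfolding x_def q(1) using s_pos by (simp add: field_simps)
  then have saw_x: "saw x = saw (real k * (real t / real s))" by (simp only: saw_add_of_nat)
  have ln_x: "ln x = ln (real k) + ln (real q / real s)"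
    unfolding x_def using k_pos s_pos q_pos by (simp add: ln_mult ln_div)
  have "saw x / x = saw (real k * (real t / real s)) / x" by (simp only: saw_x)
  also have "\<dots> = (real s / real q) * (saw (real k * (real t / real s)) / real k)"
    unfolding x_def using k_pos s_pos q_pos by (simp add: field_simps)
  finally have "\<bar>harm (k * q div s) - (ln (real k) + ln (real q / real s) + euler_mascheroni
            - (real s / real q) * (saw (real k * (real t / real s)) / real k))\<bar> \<le> 5 / x^2"
    using harm_floor_approx[of x] x_ge_k k_pos unfolding floor_x ln_x by simp
  also have "\<dots> \<le> 5 / real k ^ 2"
    using x_ge_k k_pos by (intro divide_left_mono power_mono) auto
  finally show ?thesis .
qed

lemma saw_sum_reciprocity:
  fixes s q t a N :: nat
  assumes s: "s \<ge> 1" and cop: "coprime s q" and q: "q = a * s + t" "s \<le> q" and N: "N < q"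
  shows "\<bar>saw_sum (real s / real q) N + (real s / real q) * saw_sum (real t / real s) (N * s div q)\<bar>
           \<le> 14 + ln (real q / real s)"
proof -
  define K where "K = N * s div q"
  define \<rho> where "\<rho> = real q / real s"
  define R where "R k = harm (k * q div s) - (ln (real k) + ln \<rho> + euler_mascheroni
      - (real s / real q) * (saw (real k * (real t / real s)) / real k))" for k
  have s_pos: "real s > 0" and q_pos: "q > 0" using s N by auto
  have \<rho>: "\<rho> \<ge> 1" unfolding \<rho>_def using q(2) s_pos by simp
  have sum_R: "\<bar>\<Sum>k=1..K. R k\<bar> \<le> 10"
  proof -
    have "\<bar>\<Sum>k=1..K. R k\<bar> \<le> (\<Sum>k=1..K. 5 * (1 / real k ^ 2))"
      unfolding R_def \<rho>_def using harm_div_approx[OF s q]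
      by (intro order_trans[OF sum_abs sum_mono]) simp
    also have "\<dots> = 5 * (\<Sum>k=1..K. 1 / real k ^ 2)" by (rule sum_distrib_left[symmetric])
    also have "\<dots> \<le> 5 * 2" using sum_inverse_squares_le_2[of K] by simp
    finally show ?thesis by simp
  qed
  have sum_harm: "(\<Sum>k=1..K. harm (k * q div s)) = ln (fact K) + real K * ln \<rho> + real K * euler_mascheroni
      - (real s / real q) * saw_sum (real t / real s) K + (\<Sum>k=1..K. R k)"
  proof -
    have "(\<Sum>k=1..K. harm (k * q div s)) = (\<Sum>k=1..K. ln (real k) + (ln \<rho> + euler_mascheroni)
        - (real s / real q) * (saw (real k * (real t / real s)) / real k) + R k)"
      unfolding R_def by (intro sum.cong refl) simp
    then show ?thesis
      unfolding ln_fact_eq_sum_ln saw_sum_def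
      by (simp add: sum.distrib sum_subtractf sum_distrib_left algebra_simps)
  qed
  have K: "real K \<le> real N / \<rho>" "real N / \<rho> < real K + 1"
  proof -
    have "real N / \<rho> = real (N * s) / real q" unfolding \<rho>_def using s_pos by simp
    moreover have "\<lfloor>real (N * s) / real q\<rfloor> = int K" unfolding K_def by (rule floor_divide_of_nat_eq)
    ultimately show "real K \<le> real N / \<rho>" "real N / \<rho> < real K + 1"
      using of_int_floor_le[of "real N / \<rho>"] real_of_int_floor_add_one_gt[of "real N / \<rho>"] by simp_all
  qed
  have split: "saw_sum (real s / real q) N + (real s / real q) * saw_sum (real t / real s) K =
      (real N / \<rho> - (real K + 1/2) * harm N + real K * ln \<rho> + ln (fact K) + real K * euler_mascheroni)
      + (\<Sum>k=1..K. R k)"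
    unfolding saw_sum_rational_eq[OF s cop N] K_def[symmetric] sum_harm by (simp add: \<rho>_def)
  have "\<bar>saw_sum (real s / real q) N + (real s / real q) * saw_sum (real t / real s) K\<bar>
      \<le> (4 + ln \<rho>) + 10"
    unfolding split by (rule order.trans[OF abs_triangle_ineq add_mono[OF main_term_bound[OF \<rho> K] sum_R]])
  then show ?thesis unfolding K_def \<rho>_def by simp
qed

section \<open>Products of sines\<close>

lemma monom_minus_1_eq_prod_roots_of_unity:
  assumes q: "q \<ge> 1"
  shows "(monom 1 q - 1 :: complex poly) = (\<Prod>k<q. [:- cis (2 * pi * real k / real q), 1:])"
proof -
  define p :: "complex poly" where "p = monom 1 q - 1"
  have poly_p: "poly p z = z ^ q - 1" for z unfolding p_def by (simp add: poly_monom)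
  have rsq: "rsquarefree p" unfolding rsquarefree_roots
  proof (intro allI notI)
    fix z assume z: "poly p z = 0 \<and> poly (pderiv p) z = 0"
    then have "z \<noteq> 0" using q poly_p by (auto simp: power_0_left)
    moreover have "pderiv p = monom (of_nat q) (q - 1)" unfolding p_def by (simp add: pderiv_diff pderiv_monom)
    then have "of_nat q * z ^ (q - 1) = 0" using z by (simp add: poly_monom)
    ultimately show False using q by simp
  qed
  have lc: "lead_coeff p = 1"
  proof -
    have "degree (- 1 :: complex poly) < degree (monom (1::complex) q)"
      using q by (simp add: degree_monom_eq)
    then have "lead_coeff (- 1 + monom (1::complex) q) = lead_coeff (monom 1 q)"
      by (rule lead_coeff_add_le)
    moreover have "p = - 1 + monom 1 q" unfolding p_def by simp
    ultimately show ?thesis by (simp only: lead_coeff_monom)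
  qed
  have "p = (\<Prod>z | poly p z = 0. [:-z, 1:])"
    using complex_poly_decompose_rsquarefree[OF rsq] unfolding lc by simp
  also have "{z. poly p z = 0} = {z. z ^ q = 1}" using poly_p by auto
  also have "(\<Prod>z | z ^ q = 1. [:-z, 1:]) = (\<Prod>k<q. [:- cis (2 * pi * real k / real q), 1:])"
    using q by (intro prod.reindex_bij_betw[symmetric] Complex.bij_betw_roots_unity) simp
  finally show ?thesis unfolding p_def .
qed

lemma prod_one_minus_roots_of_unity:
  assumes q: "q \<ge> 1"
  shows "(\<Prod>k\<in>{1..<q}. (1 - cis (2 * pi * real k / real q))) = (of_nat q :: complex)"
proof -
  define P where "P = (\<Prod>k\<in>{1..<q}. [:- cis (2 * pi * real k / real q), 1:])"
  have "[:-1, 1:] * (\<Sum>i<q. [:0, 1:] ^ i) = (monom 1 q - 1 :: complex poly)"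
    using power_diff_1_eq[of "[:0, 1::complex:]" q] by (simp add: monom_altdef one_pCons)
  also have "\<dots> = [:-1, 1:] * P"
  proof -
    have "{..<q} = insert 0 {1..<q}" using q by auto
    then show ?thesis unfolding monom_minus_1_eq_prod_roots_of_unity[OF q] P_def by simp
  qed
  finally have "(\<Sum>i<q. [:0, 1:] ^ i) = P"
    using mult_left_cancel[of "[:-1, 1::complex:]"] by simp
  then have "poly (\<Sum>i<q. [:0, 1:] ^ i) 1 = poly P (1::complex)" by simp
  then show ?thesis unfolding P_def by (simp add: poly_sum poly_prod)
qed

lemma norm_one_minus_cis: "norm (1 - cis \<phi>) = 2 * \<bar>sin (\<phi> / 2)\<bar>"
proof -
  have "norm (1 - cis \<phi>) ^ 2 = (1 - cos \<phi>)^2 + (sin \<phi>)^2"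
    by (simp add: cmod_power2)
  also have "\<dots> = 2 - 2 * cos \<phi>"
    using sin_cos_squared_add[of \<phi>] by (simp add: power2_eq_square algebra_simps)
  also have "cos \<phi> = 1 - 2 * sin (\<phi> / 2) ^ 2"
    using cos_double_sin[of "\<phi> / 2"] by simp
  finally have "norm (1 - cis \<phi>) ^ 2 = (2 * \<bar>sin (\<phi> / 2)\<bar>) ^ 2"
    by (simp add: power_mult_distrib)
  then show ?thesis by (rule power2_eq_imp_eq) auto
qed

lemma sin_pi_div_pos:
  assumes "j \<in> {1..<q}"
  shows "0 < sin (pi * real j / real q)"
  using assms by (intro sin_gt_zero) (auto simp: field_simps)

lemma prod_2_sin_pi_div:
  assumes q: "q \<ge> (1::nat)"
  shows "(\<Prod>j\<in>{1..<q}. 2 * sin (pi * real j / real q)) = real q"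
proof -
  have "(\<Prod>j\<in>{1..<q}. 2 * sin (pi * real j / real q)) = (\<Prod>j\<in>{1..<q}. norm (1 - cis (2 * pi * real j / real q)))"
  proof (intro prod.cong refl)
    fix j assume "j \<in> {1..<q}"
    then show "2 * sin (pi * real j / real q) = norm (1 - cis (2 * pi * real j / real q))"
      using sin_pi_div_pos[of j q] unfolding norm_one_minus_cis by simp
  qed
  also have "\<dots> = norm (\<Prod>j\<in>{1..<q}. (1 - cis (2 * pi * real j / real q)))"
    by (simp add: prod_norm)
  also have "\<dots> = real q" using prod_one_minus_roots_of_unity[OF q] by simp
  finally show ?thesis .
qed

lemma sum_ln_2_sin_pi_div:
  assumes "q \<ge> (1::nat)"
  shows "(\<Sum>j\<in>{1..<q}. ln (2 * sin (pi * real j / real q))) = ln (real q)"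
proof -
  have "ln (\<Prod>j\<in>{1..<q}. 2 * sin (pi * real j / real q)) = (\<Sum>j\<in>{1..<q}. ln (2 * sin (pi * real j / real q)))"
    by (rule ln_prod) (use sin_pi_div_pos in force)+
  then show ?thesis using prod_2_sin_pi_div[OF assms] by simp
qed

lemma abs_sin_minus_le_cube: "\<bar>sin x - x\<bar> \<le> \<bar>x\<bar> ^ 3 / 6" for x :: real
proof -
  have "\<bar>sin x - (\<Sum>m<3. sin_coeff m * x ^ m)\<bar> \<le> inverse (fact 3) * \<bar>x\<bar> ^ 3"
    by (rule Maclaurin_sin_bound)
  moreover have "(\<Sum>m<3. sin_coeff m * x ^ m) = x"
    by (simp add: sin_coeff_def eval_nat_numeral)
  moreover have "inverse (fact 3 :: real) = 1 / 6" by (simp add: eval_nat_numeral)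
  ultimately show ?thesis by simp
qed

lemma mult_cos_le_sin:
  assumes "0 \<le> z" "z \<le> pi / 2"
  shows "z * cos z \<le> sin z"
proof -
  have d: "((\<lambda>t. sin t - t * cos t) has_real_derivative t * sin t) (at t)" for t
  proof -
    show ?thesis by (rule derivative_eq_intros refl | simp)+
  qed
  have nn: "0 \<le> t * sin t" if "0 \<le> t" "t \<le> z" for t
    using assms that by (intro mult_nonneg_nonneg sin_ge_zero) auto
  have "sin 0 - 0 * cos 0 \<le> sin z - z * cos z"
    by (rule DERIV_nonneg_imp_nondecreasing[of 0 z "\<lambda>t. sin t - t * cos t"])
       (use assms d nn in blast)+
  then show ?thesis by simp
qed

lemma cos_ge_one_minus_sq_half: "1 - x^2 / 2 \<le> cos (x::real)"
proof -
  have "cos x = 1 - 2 * sin (x / 2) ^ 2" using cos_double_sin[of "x/2"] by simp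
  moreover have "sin (x / 2) ^ 2 \<le> (x / 2) ^ 2"
  proof -
    have "\<bar>sin (x/2)\<bar> \<le> \<bar>x/2\<bar>" by (rule abs_sin_x_le_abs_x)
    then have "\<bar>sin (x/2)\<bar> ^ 2 \<le> \<bar>x/2\<bar> ^ 2" by (intro power_mono) auto
    then show ?thesis by (simp add: power_divide power2_abs)
  qed
  ultimately show ?thesis by (simp add: power_divide)
qed

lemma one_minus_mult_sin_le_mult_cos:
  assumes "0 \<le> z" "z \<le> pi / 2"
  shows "(1 - z) * sin z \<le> z * cos z"
proof (cases "z \<le> 1")
  case True
  have s: "sin z \<le> z" using sin_x_le_x assms by auto
  have s0: "0 \<le> sin z" using assms by (intro sin_ge_zero) auto
  have "(1 - z) * sin z \<le> (1 - z) * z" using True s by (intro mult_left_mono) auto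
  also have "\<dots> \<le> z * (1 - z^2 / 2)"
  proof -
    have "z * z * z \<le> z * z * 1" using True assms by (intro mult_left_mono) auto
    moreover have "0 \<le> z * z" by simp
    ultimately have "z * z * z / 2 \<le> z * z" by linarith
    moreover have "(1 - z) * z = z - z * z" "z * (1 - z^2 / 2) = z - z * z * z / 2"
      by (simp_all add: algebra_simps power2_eq_square)
    ultimately show ?thesis by linarith
  qed
  also have "\<dots> \<le> z * cos z" using assms cos_ge_one_minus_sq_half[of z] by (intro mult_left_mono) auto
  finally show ?thesis .
next
  case False
  have "0 \<le> sin z" using assms by (intro sin_ge_zero) auto
  moreover have "0 \<le> cos z" using assms by (intro cos_ge_zero) auto
  ultimately have "(1 - z) * sin z \<le> 0" "0 \<le> z * cos z" using False assms
    by (auto intro: mult_nonpos_nonneg mult_nonneg_nonneg)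
  then show ?thesis by linarith
qed

lemma cot_bounds:
  assumes "0 < z" "z \<le> pi / 2"
  shows "1 / z - 1 \<le> cot z" "cot z \<le> 1 / z"
proof -
  have sp: "sin z > 0" using assms pi_gt3 by (intro sin_gt_zero) auto
  have a: "z * cos z \<le> sin z" using mult_cos_le_sin assms by auto
  have b: "(1 - z) * sin z \<le> z * cos z" using one_minus_mult_sin_le_mult_cos assms by auto
  show "cot z \<le> 1 / z" unfolding cot_def using a sp assms by (simp add: field_simps)
  show "1 / z - 1 \<le> cot z" unfolding cot_def using b sp assms by (simp add: field_simps)
qed

lemma cot_pi_approx:
  assumes "0 < w" "w < 1"
  shows "\<bar>cot (pi * w) - 1 / (pi * w) + 1 / (pi * (1 - w))\<bar> \<le> 1"
proof -
  have half: "\<bar>cot (pi * v) - 1 / (pi * v) + 1 / (pi * (1 - v))\<bar> \<le> 1" if v: "0 < v" "v \<le> 1/2" for v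
  proof -
    have "1 / (pi * v) - 1 \<le> cot (pi * v)" "cot (pi * v) \<le> 1 / (pi * v)"
      using cot_bounds[of "pi * v"] v by auto
    moreover have "3 * (1/2) \<le> pi * (1 - v)" using v pi_gt3 by (intro mult_mono) auto
    then have "0 \<le> 1 / (pi * (1 - v))" "1 / (pi * (1 - v)) \<le> 1" by auto
    ultimately show ?thesis by (intro abs_leI) linarith+
  qed
  show ?thesis
  proof (cases "w \<le> 1/2")
    case False
    have "cot (pi * w) = - cot (pi * (1 - w))"
      unfolding cot_def right_diff_distrib by (simp add: sin_diff cos_diff)
    then have "cot (pi * w) - 1 / (pi * w) + 1 / (pi * (1 - w)) =
        - (cot (pi * (1 - w)) - 1 / (pi * (1 - w)) + 1 / (pi * (1 - (1 - w))))"
      by simp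
    then show ?thesis using half[of "1 - w"] False assms by simp
  qed (use half assms in auto)
qed

lemma ln_sin_pi_add_le:
  assumes w: "0 < w" "w < 1" and wh: "0 < w + h" "w + h < 1"
  shows "ln (sin (pi * (w + h))) \<le> ln (sin (pi * w)) + pi * h * cot (pi * w) + \<bar>cot (pi * w)\<bar> * \<bar>pi * h\<bar> ^ 3 / 6"
proof -
  have s1: "sin (pi * w) > 0" using w by (intro sin_gt_zero) auto
  have s2: "sin (pi * (w + h)) > 0" using wh by (intro sin_gt_zero) auto
  define \<rho> where "\<rho> = sin (pi * (w + h)) / sin (pi * w)"
  have \<rho>pos: "\<rho> > 0" unfolding \<rho>_def using s1 s2 by simp
  have \<rho>eq: "\<rho> = cos (pi * h) + cot (pi * w) * sin (pi * h)"
  proof -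
    have "sin (pi * (w + h)) = sin (pi * w) * cos (pi * h) + cos (pi * w) * sin (pi * h)"
      by (simp add: distrib_left sin_add)
    then show ?thesis unfolding \<rho>_def cot_def using s1 by (simp add: field_simps)
  qed
  have lnsplit: "ln (sin (pi * (w + h))) = ln (sin (pi * w)) + ln \<rho>"
    unfolding \<rho>_def using s1 s2 by (simp add: ln_div)
  have "ln \<rho> \<le> \<rho> - 1" by (rule ln_le_minus_one[OF \<rho>pos])
  also have "\<dots> \<le> cot (pi * w) * sin (pi * h)" unfolding \<rho>eq using cos_le_one[of "pi * h"] by simp
  also have "\<dots> = pi * h * cot (pi * w) + cot (pi * w) * (sin (pi * h) - pi * h)"
    by (simp add: algebra_simps)
  also have "cot (pi * w) * (sin (pi * h) - pi * h) \<le> \<bar>cot (pi * w)\<bar> * \<bar>pi * h\<bar> ^ 3 / 6"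
  proof -
    have "cot (pi * w) * (sin (pi * h) - pi * h) \<le> \<bar>cot (pi * w)\<bar> * \<bar>sin (pi * h) - pi * h\<bar>"
      by (metis abs_ge_self abs_mult)
    also have "\<dots> \<le> \<bar>cot (pi * w)\<bar> * (\<bar>pi * h\<bar> ^ 3 / 6)"
      by (intro mult_left_mono abs_sin_minus_le_cube) auto
    finally show ?thesis by simp
  qed
  finally show ?thesis unfolding lnsplit by simp
qed

section \<open>The Sudler product at a convergent denominator\<close>

lemma le_exp_if_ln_le:
  fixes x c :: real
  assumes "0 \<le> x" "ln x \<le> c"
  shows "x \<le> exp c"
proof (cases "x = 0")
  case False
  then have "x = exp (ln x)" using assms(1) by simp
  also have "\<dots> \<le> exp c" using assms(2) by simp
  finally show ?thesis .
qed simp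

lemma sudler_nonneg: "0 \<le> sudler N \<alpha>"
  unfolding sudler_def by (intro prod_nonneg) auto

lemma not_dvd_mult_if_coprime:
  fixes s q j :: nat
  assumes "coprime s q" "j \<in> {1..<q}"
  shows "\<not> q dvd j * s"
proof
  assume "q dvd j * s"
  then have "q dvd j" using assms(1) by (simp add: coprime_dvd_mult_left_iff coprime_commute)
  then show False using assms(2) by (auto dest: dvd_imp_le)
qed

lemma bij_betw_mult_mod:
  fixes s q :: nat
  assumes cop: "coprime s q"
  shows "bij_betw (\<lambda>j. j * s mod q) {1..<q} {1..<q}"
proof -
  have maps: "(\<lambda>j. j * s mod q) ` {1..<q} \<subseteq> {1..<q}"
  proof (rule image_subsetI)
    fix j assume j: "j \<in> {1..<q}"
    then have "j * s mod q \<noteq> 0" using not_dvd_mult_if_coprime[OF cop] by (simp add: dvd_eq_mod_eq_0)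
    moreover have "j * s mod q < q" using j by simp
    ultimately show "j * s mod q \<in> {1..<q}" by simp
  qed
  have eq_if_le: "a = b" if "b \<le> a" "a \<in> {1..<q}" "b \<in> {1..<q}" "a * s mod q = b * s mod q" for a b
  proof -
    have "q dvd (a - b) * s" using that by (simp add: mod_eq_dvd_iff_nat diff_mult_distrib)
    then have "q dvd a - b" using cop by (simp add: coprime_dvd_mult_left_iff coprime_commute)
    moreover have "a - b < q" using that by auto
    ultimately show "a = b" using that by (metis dvd_imp_le neq0_conv not_le diff_is_0_eq le_antisym)
  qed
  have inj: "inj_on (\<lambda>j. j * s mod q) {1..<q}"
    by (rule inj_onI) (metis eq_if_le nle_le)
  have "(\<lambda>j. j * s mod q) ` {1..<q} = {1..<q}" by (rule endo_inj_surj[OF _ maps inj]) simp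
  then show ?thesis using inj unfolding bij_betw_def by simp
qed

lemma mult_div_not_Ints:
  fixes j s q :: nat
  assumes "coprime s q" "j \<in> {1..<q}"
  shows "real j * (real s / real q) \<notin> \<int>"
proof
  assume "real j * (real s / real q) \<in> \<int>"
  then obtain k where "real j * (real s / real q) = of_int k" by (auto elim: Ints_cases)
  then have "real (j * s) = real q * of_int k" using assms(2) by (simp add: field_simps)
  then have "int (j * s) = int q * k" by (metis of_int_eq_iff of_int_mult of_int_of_nat_eq)
  then have "q dvd j * s" by (metis dvd_triv_left of_nat_dvd_iff)
  then show False using not_dvd_mult_if_coprime[OF assms] by contradiction
qed

lemma reflect_bij_betw: "bij_betw (\<lambda>j. q - j) {1..<q} {1..<(q::nat)}"
  by (rule bij_betwI[where g = "\<lambda>j. q - j"]) auto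

lemma sum_cot_pi_div_eq_0: "(\<Sum>j\<in>{1..<q}. cot (pi * real j / real q)) = 0"
proof -
  have "(\<Sum>j\<in>{1..<q}. cot (pi * real j / real q)) = (\<Sum>j\<in>{1..<q}. cot (pi * real (q - j) / real q))"
    by (rule sum.reindex_bij_betw[OF reflect_bij_betw, symmetric])
  also have "\<dots> = (\<Sum>j\<in>{1..<q}. - cot (pi * real j / real q))"
  proof (intro sum.cong refl)
    fix j assume "j \<in> {1..<q}"
    then have "pi * real (q - j) / real q = pi - pi * real j / real q"
      by (simp add: of_nat_diff field_simps)
    then show "cot (pi * real (q - j) / real q) = - cot (pi * real j / real q)"
      by (simp add: cot_def)
  qed
  finally show ?thesis by (simp add: sum_negf)
qed

lemma sum_saw_reflect:
  fixes s q :: nat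
  assumes cop: "coprime s q"
  shows "(\<Sum>j\<in>{1..<q}. saw (real j * (real s / real q)) / real (q - j)) = - saw_sum (real s / real q) (q - 1)"
proof -
  have "(\<Sum>j\<in>{1..<q}. saw (real j * (real s / real q)) / real (q - j)) =
        (\<Sum>j\<in>{1..<q}. saw (real (q - j) * (real s / real q)) / real (q - (q - j)))"
    by (rule sum.reindex_bij_betw[OF reflect_bij_betw, symmetric])
  also have "\<dots> = (\<Sum>j\<in>{1..<q}. - (saw (real j * (real s / real q)) / real j))"
  proof (intro sum.cong refl)
    fix j assume j: "j \<in> {1..<q}"
    then have "real (q - j) * (real s / real q) = - (real j * (real s / real q)) + real s"
      by (simp add: of_nat_diff field_simps)
    then have "saw (real (q - j) * (real s / real q)) = saw (- (real j * (real s / real q)))"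
      by (simp only: saw_add_of_nat)
    also have "\<dots> = - saw (real j * (real s / real q))"
      by (rule saw_minus[OF mult_div_not_Ints[OF cop j]])
    finally
    show "saw (real (q - j) * (real s / real q)) / real (q - (q - j)) =
        - (saw (real j * (real s / real q)) / real j)"
      using j by simp
  qed
  also have "\<dots> = - saw_sum (real s / real q) (q - 1)"
  proof -
    have "{1..<q} = {1..q - 1}" by auto
    then show ?thesis unfolding saw_sum_def by (simp add: sum_negf)
  qed
  finally show ?thesis .
qed

lemma abs_sin_add_mult_pi: "\<bar>sin (x + pi * of_int m)\<bar> = \<bar>sin x\<bar>"
  by (simp add: sin_add abs_mult)

lemma abs_cot_pi_div_le:
  assumes "j \<in> {1..<q}"
  shows "\<bar>cot (pi * real j / real q)\<bar> \<le> real q + 1"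
proof -
  define A where "A = 1 / (pi * (real j / real q))"
  define B where "B = 1 / (pi * (1 - real j / real q))"
  have w: "0 < real j / real q" "real j / real q < 1" using assms by auto
  have "\<bar>cot (pi * real j / real q) - A + B\<bar> \<le> 1"
    using cot_pi_approx[OF w] unfolding A_def B_def by simp
  moreover have "real q / pi \<le> real q / 1" using pi_gt3 by (intro divide_left_mono) auto
  moreover have "0 \<le> A" "A \<le> real q / pi"
    using assms unfolding A_def by (auto simp: field_simps)
  moreover have "0 \<le> B" "B \<le> real q / pi"
  proof -
    have "B = real q / (pi * real (q - j))"
      using assms unfolding B_def by (simp add: of_nat_diff field_simps)
    moreover have "real q / (pi * real (q - j)) \<le> real q / (pi * 1)"
      using assms by (intro divide_left_mono mult_left_mono) auto
    ultimately show "0 \<le> B" "B \<le> real q / pi" by simp_all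
  qed
  ultimately show ?thesis by (simp add: abs_le_iff)
qed

lemma sum_saw_cot_le:
  fixes s q :: nat
  assumes cop: "coprime s q"
  shows "\<bar>\<Sum>j\<in>{1..<q}. saw (real j * (real s / real q)) * cot (pi * real j / real q)\<bar>
           \<le> 2 * real q / pi * \<bar>saw_sum (real s / real q) (q - 1)\<bar> + real q / 2"
proof -
  define G where "G = saw_sum (real s / real q) (q - 1)"
  define sw where "sw j = saw (real j * (real s / real q))" for j
  define b where "b j = cot (pi * real j / real q) - real q / (pi * real j) + real q / (pi * real (q - j))" for j
  have b: "\<bar>b j\<bar> \<le> 1" if j: "j \<in> {1..<q}" for j
  proof -
    have w: "0 < real j / real q" "real j / real q < 1" using j by auto
    have "1 / (pi * (1 - real j / real q)) = real q / (pi * real (q - j))"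
      using j by (simp add: of_nat_diff field_simps)
    moreover have "1 / (pi * (real j / real q)) = real q / (pi * real j)" by simp
    ultimately show ?thesis using cot_pi_approx[OF w] unfolding b_def by (simp add: mult.assoc)
  qed
  have "(\<Sum>j\<in>{1..<q}. sw j * cot (pi * real j / real q)) =
      (\<Sum>j\<in>{1..<q}. real q / pi * (sw j / real j) - real q / pi * (sw j / real (q - j)) + sw j * b j)"
    unfolding b_def by (intro sum.cong refl) (simp add: algebra_simps)
  also have "\<dots> = real q / pi * (\<Sum>j\<in>{1..<q}. sw j / real j)
      - real q / pi * (\<Sum>j\<in>{1..<q}. sw j / real (q - j)) + (\<Sum>j\<in>{1..<q}. sw j * b j)"
    by (simp add: sum.distrib sum_subtractf sum_distrib_left)
  also have "(\<Sum>j\<in>{1..<q}. sw j / real j) = G"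
  proof -
    have "{1..<q} = {1..q - 1}" by auto
    then show ?thesis unfolding G_def saw_sum_def sw_def by simp
  qed
  also have "(\<Sum>j\<in>{1..<q}. sw j / real (q - j)) = - G"
    unfolding G_def sw_def by (rule sum_saw_reflect[OF cop])
  finally have split: "(\<Sum>j\<in>{1..<q}. sw j * cot (pi * real j / real q)) =
      2 * (real q / pi) * G + (\<Sum>j\<in>{1..<q}. sw j * b j)" by simp
  have "\<bar>\<Sum>j\<in>{1..<q}. sw j * b j\<bar> \<le> (\<Sum>j\<in>{1..<q}. \<bar>sw j\<bar> * \<bar>b j\<bar>)"
    unfolding abs_mult[symmetric] by (rule sum_abs)
  also have "\<dots> \<le> (\<Sum>j\<in>{1..<q}. 1/2 * 1)"
    unfolding sw_def by (intro sum_mono mult_mono abs_saw_le b) auto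
  also have "\<dots> \<le> real q / 2" by simp
  finally have rest: "\<bar>\<Sum>j\<in>{1..<q}. sw j * b j\<bar> \<le> real q / 2" .
  show ?thesis
    unfolding sw_def[symmetric] G_def[symmetric] split
    by (rule order_trans[OF abs_triangle_ineq add_mono[OF _ rest]]) (simp add: abs_mult)
qed

text \<open>In the following lemmas \<open>p'/s\<close> and \<open>p/q\<close> play the role of consecutive convergents of
  \<open>\<alpha>\<close>, and \<open>\<tau> = \<bar>q \<alpha> - p\<bar>\<close>.\<close>

lemma abs_sin_pi_mult_mod:
  fixes q s j :: nat and p p' e :: int and \<alpha> \<tau> :: real
  assumes q: "q \<ge> 1" and det: "int s * p - int q * p' = e" and e: "e = 1 \<or> e = -1"
    and approx: "real q * \<alpha> - of_int p = - of_int e * \<tau>"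
  shows "\<bar>sin (pi * real (j * s mod q) * \<alpha>)\<bar>
           = \<bar>sin (pi * (real j / real q - real (j * s mod q) * \<tau> / real q))\<bar>"
proof -
  define r where "r = j * s mod q"
  define D where "D = j * s div q"
  define m where "m = int j * p' - int D * p"
  have qpos: "real q > 0" using q by simp
  have rD: "int r = int j * int s - int q * int D"
    unfolding r_def D_def by (metis add_diff_cancel_left' div_mult_mod_eq mult.commute of_nat_add of_nat_mult)
  \<comment> \<open>r p = e j mod q, so \<pi> r \<alpha> equals e \<pi> (j/q - r \<tau>/q) modulo \<pi>\<close>
  have rp: "int r * p = e * int j + int q * m"
  proof -
    have "int r * p = int j * (int s * p) - int q * int D * p" unfolding rD by (simp add: algebra_simps)
    also have "int s * p = e + int q * p'" using det by simp
    finally show ?thesis unfolding m_def by (simp add: algebra_simps)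
  qed
  have rp': "real r * of_int p = of_int e * real j + real q * of_int m"
    using arg_cong[OF rp, of "of_int :: int \<Rightarrow> real"] by simp
  have al: "\<alpha> = (of_int p - of_int e * \<tau>) / real q" using approx qpos by (simp add: field_simps)
  have "pi * real r * \<alpha> = of_int e * (pi * (real j / real q - real r * \<tau> / real q)) + pi * of_int m"
  proof -
    have "pi * real r * \<alpha> = pi * (real r * of_int p) / real q - pi * of_int e * real r * \<tau> / real q"
      unfolding al using qpos by (simp add: field_simps)
    also have "\<dots> = pi * (of_int e * real j + real q * of_int m) / real q - pi * of_int e * real r * \<tau> / real q"
      unfolding rp' ..
    also have "\<dots> = of_int e * (pi * (real j / real q - real r * \<tau> / real q)) + pi * of_int m"
      using qpos by (simp add: field_simps)
    finally show ?thesis .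
  qed
  then have "\<bar>sin (pi * real r * \<alpha>)\<bar> = \<bar>sin (of_int e * (pi * (real j / real q - real r * \<tau> / real q)))\<bar>"
    using abs_sin_add_mult_pi by simp
  also have "\<dots> = \<bar>sin (pi * (real j / real q - real r * \<tau> / real q))\<bar>"
    using e by auto
  finally show ?thesis unfolding r_def .
qed

lemma ln_2_sin_pi_sub_le:
  fixes j q r :: nat and \<tau> :: real
  assumes j: "j \<in> {1..<q}" and r: "r \<le> q" and \<tau>: "0 < \<tau>" "real q * \<tau> < 1"
  shows "ln (2 * sin (pi * (real j / real q - real r * \<tau> / real q)))
      \<le> ln (2 * sin (pi * real j / real q)) - pi * \<tau> * (real r / real q) * cot (pi * real j / real q)
         + (real q + 1) * (pi * \<tau>) ^ 3 / 6"
proof -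
  define w where "w = real j / real q"
  define d where "d = real r * \<tau> / real q"
  have q: "real q > 0" using j by auto
  have w: "0 < w" "w < 1" unfolding w_def using j by auto
  have "real r * \<tau> \<le> real q * \<tau>" using r \<tau> by (intro mult_right_mono) auto
  moreover have "1 \<le> real j" using j by simp
  ultimately have "real r * \<tau> < real j" using \<tau> by linarith
  then have "d < w" unfolding w_def d_def using q by (intro divide_strict_right_mono)
  moreover have "0 \<le> d" unfolding d_def using \<tau> by simp
  ultimately have wd: "0 < w + - d" "w + - d < 1" using w by linarith+
  have sin_pos: "sin (pi * w) > 0" "sin (pi * (w + - d)) > 0"
    using w wd by (auto intro!: sin_gt_zero)
  have "\<bar>pi * - d\<bar> \<le> pi * \<tau>"
    unfolding d_def using r \<tau> q by (simp add: abs_mult field_simps mult_left_mono)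
  then have "\<bar>cot (pi * w)\<bar> * \<bar>pi * - d\<bar> ^ 3 / 6 \<le> (real q + 1) * (pi * \<tau>) ^ 3 / 6"
    using abs_cot_pi_div_le[OF j] unfolding w_def
    by (intro divide_right_mono mult_mono power_mono) auto
  then have "ln (sin (pi * (w + - d))) \<le> ln (sin (pi * w)) + pi * - d * cot (pi * w)
      + (real q + 1) * (pi * \<tau>) ^ 3 / 6"
    using ln_sin_pi_add_le[OF w wd] by linarith
  then show ?thesis
    using sin_pos unfolding w_def d_def by (simp add: ln_mult algebra_simps)
qed

lemma sudler_factor_eq:
  fixes q s j :: nat and p p' e :: int and \<alpha> \<tau> :: real
  assumes q: "q \<ge> 1" and det: "int s * p - int q * p' = e" and e: "e = 1 \<or> e = -1"
    and approx: "real q * \<alpha> - of_int p = - of_int e * \<tau>" and \<tau>: "0 < \<tau>" "real q * \<tau> < 1"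
    and j: "j \<in> {1..<q}"
  shows "0 < sin (pi * (real j / real q - real (j * s mod q) * \<tau> / real q))"
    and "\<bar>2 * sin (pi * real (j * s mod q) * \<alpha>)\<bar>
           = 2 * sin (pi * (real j / real q - real (j * s mod q) * \<tau> / real q))"
proof -
  have "real (j * s mod q) * \<tau> \<le> real q * \<tau>" using q \<tau> by (intro mult_right_mono) auto
  moreover have "1 \<le> real j" using j by simp
  ultimately have "real (j * s mod q) * \<tau> < real j" using \<tau> by linarith
  moreover have "0 \<le> real (j * s mod q) * \<tau>" using \<tau> by simp
  ultimately have "0 < (real j - real (j * s mod q) * \<tau>) / real q"
    "(real j - real (j * s mod q) * \<tau>) / real q < 1"
    using j by (auto simp: divide_less_eq)
  then show sin_pos: "0 < sin (pi * (real j / real q - real (j * s mod q) * \<tau> / real q))"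
    by (intro sin_gt_zero) (auto simp: diff_divide_distrib)
  then show "\<bar>2 * sin (pi * real (j * s mod q) * \<alpha>)\<bar>
      = 2 * sin (pi * (real j / real q - real (j * s mod q) * \<tau> / real q))"
    using abs_sin_pi_mult_mod[OF q det e approx, of j] by (simp add: abs_mult)
qed

lemma sudler_last_factor_eq:
  fixes q :: nat and p e :: int and \<alpha> \<tau> :: real
  assumes e: "e = 1 \<or> e = -1" and approx: "real q * \<alpha> - of_int p = - of_int e * \<tau>"
  shows "\<bar>2 * sin (pi * real q * \<alpha>)\<bar> = 2 * \<bar>sin (pi * \<tau>)\<bar>"
proof -
  have "real q * \<alpha> = of_int p - of_int e * \<tau>" using approx by simp
  then have "pi * (real q * \<alpha>) = pi * (of_int p - of_int e * \<tau>)" by simp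
  then have "pi * real q * \<alpha> = - of_int e * (pi * \<tau>) + pi * of_int p"
    by (simp add: algebra_simps)
  then have "\<bar>sin (pi * real q * \<alpha>)\<bar> = \<bar>sin (- of_int e * (pi * \<tau>) + pi * of_int p)\<bar>"
    by (simp only:)
  also have "\<dots> = \<bar>sin (- of_int e * (pi * \<tau>))\<bar>" by (rule abs_sin_add_mult_pi)
  also have "\<dots> = \<bar>sin (pi * \<tau>)\<bar>" using e by auto
  finally show ?thesis by (simp add: abs_mult)
qed

lemma ln_sudler_eq_sum:
  fixes q s :: nat and p p' e :: int and \<alpha> \<tau> :: real
  assumes q: "q \<ge> 1" and cop: "coprime s q" and det: "int s * p - int q * p' = e" and e: "e = 1 \<or> e = -1"
    and approx: "real q * \<alpha> - of_int p = - of_int e * \<tau>" and \<tau>: "0 < \<tau>" "real q * \<tau> < 1"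
  shows "ln (sudler q \<alpha>) = ln (2 * sin (pi * \<tau>))
      + (\<Sum>j\<in>{1..<q}. ln (2 * sin (pi * (real j / real q - real (j * s mod q) * \<tau> / real q))))"
proof -
  define f where "f r = \<bar>2 * sin (pi * real r * \<alpha>)\<bar>" for r :: nat
  note factor = sudler_factor_eq[OF q det e approx \<tau>, folded f_def]
  have "1 * \<tau> \<le> real q * \<tau>" using q \<tau> by (intro mult_right_mono) auto
  then have "\<tau> < 1" using \<tau> by linarith
  then have "0 < sin (pi * \<tau>)" using \<tau> by (intro sin_gt_zero) auto
  then have last: "0 < f q" "f q = 2 * sin (pi * \<tau>)"
    using sudler_last_factor_eq[OF e approx] unfolding f_def by simp_all
  have pos: "0 < f r" if "r \<in> {1..<q}" for r
  proof -
    have "r \<in> (\<lambda>j. j * s mod q) ` {1..<q}"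
      using bij_betw_imp_surj_on[OF bij_betw_mult_mod[OF cop]] that by simp
    then obtain j where "j \<in> {1..<q}" "r = j * s mod q" by (rule imageE)
    then show ?thesis using factor by simp
  qed
  have "{1..q} = insert q {1..<q}" using q by auto
  then have "ln (sudler q \<alpha>) = ln (f q * (\<Prod>r\<in>{1..<q}. f r))"
    unfolding sudler_def f_def by simp
  also have "\<dots> = ln (f q) + ln (\<Prod>r\<in>{1..<q}. f r)"
    using last(1) pos by (intro ln_mult_pos prod_pos) (auto intro: less_imp_le)
  also have "ln (\<Prod>r\<in>{1..<q}. f r) = (\<Sum>r\<in>{1..<q}. ln (f r))"
    by (rule ln_prod) (use pos in force)+
  also have "(\<Sum>r\<in>{1..<q}. ln (f r)) = (\<Sum>j\<in>{1..<q}. ln (f (j * s mod q)))"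
    by (rule sum.reindex_bij_betw[OF bij_betw_mult_mod[OF cop], symmetric])
  finally show ?thesis by (simp add: last factor)
qed

lemma sum_ln_2_sin_perturbed_le:
  fixes q s :: nat and \<tau> :: real
  assumes q: "q \<ge> 1" and \<tau>: "0 < \<tau>" "real q * \<tau> < 1"
  shows "(\<Sum>j\<in>{1..<q}. ln (2 * sin (pi * (real j / real q - real (j * s mod q) * \<tau> / real q))))
      \<le> ln (real q) - pi * \<tau> * (\<Sum>j\<in>{1..<q}. saw (real j * (real s / real q)) * cot (pi * real j / real q))
         + real (q - 1) * ((real q + 1) * (pi * \<tau>) ^ 3 / 6)"
proof -
  define S where "S = (\<Sum>j\<in>{1..<q}. saw (real j * (real s / real q)) * cot (pi * real j / real q))"
  define E where "E = (real q + 1) * (pi * \<tau>) ^ 3 / 6"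
  have "(\<Sum>j\<in>{1..<q}. ln (2 * sin (pi * (real j / real q - real (j * s mod q) * \<tau> / real q))))
      \<le> (\<Sum>j\<in>{1..<q}. ln (2 * sin (pi * real j / real q))
           - pi * \<tau> * (real (j * s mod q) / real q) * cot (pi * real j / real q) + E)"
    unfolding E_def using q by (intro sum_mono ln_2_sin_pi_sub_le \<tau>) auto
  also have "\<dots> = ln (real q) - pi * \<tau> * S + real (q - 1) * E"
  proof -
    have "real (j * s mod q) / real q = saw (real j * (real s / real q)) + 1/2" for j
      using saw_mult_of_nat_div[OF q] by simp
    then have "(\<Sum>j\<in>{1..<q}. pi * \<tau> * (real (j * s mod q) / real q) * cot (pi * real j / real q))
        = pi * \<tau> * (S + 1/2 * (\<Sum>j\<in>{1..<q}. cot (pi * real j / real q)))"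
      unfolding S_def by (simp add: sum_distrib_left sum.distrib algebra_simps)
    then show ?thesis
      unfolding sum_cot_pi_div_eq_0 using sum_ln_2_sin_pi_div[OF q] by (simp add: sum.distrib sum_subtractf)
  qed
  finally show ?thesis unfolding S_def E_def .
qed

lemma ln_2_sin_pi_add_ln_le:
  fixes q :: nat and \<tau> :: real
  assumes q: "q \<ge> 1" and \<tau>: "0 < \<tau>" "real q * \<tau> < 1"
  shows "ln (2 * sin (pi * \<tau>)) + ln (real q) \<le> 7"
proof -
  have "1 * \<tau> \<le> real q * \<tau>" using q \<tau> by (intro mult_right_mono) auto
  then have "\<tau> < 1" using \<tau> by linarith
  then have "0 < sin (pi * \<tau>)" using \<tau> by (intro sin_gt_zero) auto
  then have "ln (2 * sin (pi * \<tau>)) + ln (real q) \<le> ln (2 * pi * \<tau>) + ln (real q)"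
    using sin_x_le_x[of "pi * \<tau>"] \<tau> by simp
  also have "\<dots> = ln (2 * pi * (real q * \<tau>))" using \<tau> q by (simp add: ln_mult algebra_simps)
  also have "\<dots> \<le> 2 * pi * (real q * \<tau>) - 1" using \<tau> q by (intro ln_le_minus_one) simp
  also have "\<dots> \<le> 2 * 4 * 1 - 1" using pi_less_4 \<tau> q by (intro diff_right_mono mult_mono) auto
  finally show ?thesis by simp
qed

lemma ln_sudler_le_saw_sum:
  fixes q s :: nat and p p' e :: int and \<alpha> \<tau> :: real
  assumes q: "q \<ge> 1" and cop: "coprime s q" and det: "int s * p - int q * p' = e" and e: "e = 1 \<or> e = -1"
    and approx: "real q * \<alpha> - of_int p = - of_int e * \<tau>" and \<tau>: "0 < \<tau>" "real q * \<tau> < 1"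
  shows "ln (sudler q \<alpha>) \<le> 20 + 2 * \<tau> * real q * \<bar>saw_sum (real s / real q) (q - 1)\<bar>"
proof -
  define G where "G = saw_sum (real s / real q) (q - 1)"
  define S where "S = (\<Sum>j\<in>{1..<q}. saw (real j * (real s / real q)) * cot (pi * real j / real q))"
  have "1 * \<tau> \<le> real q * \<tau>" using q \<tau> by (intro mult_right_mono) auto
  then have \<tau>1: "\<tau> < 1" using \<tau> by linarith
  have main: "ln (sudler q \<alpha>) \<le> ln (2 * sin (pi * \<tau>)) + ln (real q) - pi * \<tau> * S
      + real (q - 1) * ((real q + 1) * (pi * \<tau>) ^ 3 / 6)"
    using sum_ln_2_sin_perturbed_le[OF q \<tau>, of s]
    unfolding ln_sudler_eq_sum[OF q cop det e approx \<tau>] S_def by simp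
  have linear: "- (pi * \<tau> * S) \<le> 2 * \<tau> * real q * \<bar>G\<bar> + 2"
  proof -
    have "pi * \<tau> * (- S) \<le> pi * \<tau> * \<bar>S\<bar>" using \<tau> by (intro mult_left_mono) auto
    also have "\<dots> \<le> pi * \<tau> * (2 * real q / pi * \<bar>G\<bar> + real q / 2)"
      using sum_saw_cot_le[OF cop] \<tau> unfolding S_def G_def by (intro mult_left_mono) auto
    also have "\<dots> = 2 * \<tau> * real q * \<bar>G\<bar> + pi * (real q * \<tau>) / 2" by (simp add: field_simps)
    also have "pi * (real q * \<tau>) / 2 \<le> 4 * 1 / 2"
      using pi_less_4 \<tau> by (intro divide_right_mono mult_mono) auto
    finally show ?thesis by simp
  qed
  have cubic: "real (q - 1) * ((real q + 1) * (pi * \<tau>) ^ 3 / 6) \<le> 11"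
  proof -
    have "real (q - 1) * ((real q + 1) * (pi * \<tau>) ^ 3 / 6) \<le> (real q * \<tau>) ^ 2 * \<tau> * pi ^ 3 / 6"
      using q \<tau> by (simp add: of_nat_diff power2_eq_square power3_eq_cube algebra_simps mult_right_mono)
    also have "\<dots> \<le> 1 * 1 * 4 ^ 3 / 6"
      using \<tau> \<tau>1 pi_less_4 power_mono[of pi 4 3]
      by (intro divide_right_mono mult_mono power_le_one) auto
    finally show ?thesis by (simp add: mult_ac)
  qed
  show ?thesis using main ln_2_sin_pi_add_ln_le[OF q \<tau>] linear cubic unfolding G_def by linarith
qed

section \<open>Continued fractions\<close>

definition gauss_orbit :: "real \<Rightarrow> nat \<Rightarrow> real" where
  "gauss_orbit \<alpha> k = (gauss_map ^^ k) \<alpha>"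

fun cf_num :: "real \<Rightarrow> nat \<Rightarrow> nat" where
  "cf_num \<alpha> 0 = 0"
| "cf_num \<alpha> (Suc 0) = 1"
| "cf_num \<alpha> (Suc (Suc n)) = cf_digit \<alpha> (n + 2) * cf_num \<alpha> (Suc n) + cf_num \<alpha> n"

definition cf_error :: "real \<Rightarrow> nat \<Rightarrow> real" where
  "cf_error \<alpha> n = real (cf_denom \<alpha> n) * \<alpha> - real (cf_num \<alpha> n)"

lemma gauss_orbit_Suc: "gauss_orbit \<alpha> (Suc k) = frac (1 / gauss_orbit \<alpha> k)"
  unfolding gauss_orbit_def gauss_map_def by simp

lemma gauss_map_irrational:
  assumes "0 < x" "x < 1" "x \<notin> \<rat>"
  shows "0 < frac (1 / x) \<and> frac (1 / x) < 1 \<and> frac (1 / x) \<notin> \<rat>"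
proof -
  have "1 / x \<notin> \<rat>"
    using assms Rats_divide[OF Rats_1, of "1 / x"] by auto
  then have irr: "frac (1 / x) \<notin> \<rat>"
    using Rats_add[of "frac (1 / x)" "of_int \<lfloor>1 / x\<rfloor>"] by (auto simp: frac_def)
  then have "frac (1 / x) \<noteq> 0" by (metis Rats_0)
  then show ?thesis using irr frac_ge_0[of "1 / x"] frac_lt_1[of "1 / x"] by auto
qed

lemma cf_det:
  "int (cf_denom \<alpha> n) * int (cf_num \<alpha> (Suc n)) - int (cf_denom \<alpha> (Suc n)) * int (cf_num \<alpha> n) = (-1) ^ n"
  by (induction n) (simp_all add: algebra_simps)

lemma cf_denom_Suc_ge: "cf_denom \<alpha> (Suc n) \<ge> cf_digit \<alpha> (Suc n) * cf_denom \<alpha> n"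
  by (cases n) simp_all

text \<open>The bound for |saw_sum (q_m / q_(m+1)) N| with N < q_(m+1) that results from iterating
  \<open>saw_sum_reciprocity\<close> along the continued fraction (\<open>abs_saw_sum_cf_le\<close> below).\<close>

fun cf_saw_bound :: "real \<Rightarrow> nat \<Rightarrow> real" where
  "cf_saw_bound \<alpha> 0 = 0"
| "cf_saw_bound \<alpha> (Suc m) = real (cf_denom \<alpha> m) / real (cf_denom \<alpha> (Suc m)) * cf_saw_bound \<alpha> m
     + 14 + ln (real (cf_denom \<alpha> (Suc m)) / real (cf_denom \<alpha> m))"

context
  fixes \<alpha> :: real
  assumes \<alpha>: "0 < \<alpha>" "\<alpha> < 1" "\<alpha> \<notin> \<rat>"
begin

lemma gauss_orbit_bounds: "0 < gauss_orbit \<alpha> k" "gauss_orbit \<alpha> k < 1"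
proof -
  have "0 < gauss_orbit \<alpha> k \<and> gauss_orbit \<alpha> k < 1 \<and> gauss_orbit \<alpha> k \<notin> \<rat>"
  proof (induction k)
    case (Suc k)
    then show ?case unfolding gauss_orbit_Suc using gauss_map_irrational by blast
  qed (use \<alpha> in \<open>simp add: gauss_orbit_def\<close>)
  then show "0 < gauss_orbit \<alpha> k" "gauss_orbit \<alpha> k < 1" by auto
qed

lemma cf_digit_Suc: "real (cf_digit \<alpha> (Suc k)) = 1 / gauss_orbit \<alpha> k - gauss_orbit \<alpha> (Suc k)"
  and cf_digit_ge_1: "cf_digit \<alpha> (Suc k) \<ge> 1"
proof -
  have "1 < 1 / gauss_orbit \<alpha> k" using gauss_orbit_bounds[of k] by simp
  then have floor: "\<lfloor>1 / gauss_orbit \<alpha> k\<rfloor> \<ge> 1" by (simp add: le_floor_iff)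
  have digit: "cf_digit \<alpha> (Suc k) = nat \<lfloor>1 / gauss_orbit \<alpha> k\<rfloor>" unfolding cf_digit_def gauss_orbit_def by simp
  have "real (nat \<lfloor>1 / gauss_orbit \<alpha> k\<rfloor>) = of_int \<lfloor>1 / gauss_orbit \<alpha> k\<rfloor>"
    using floor by (intro of_nat_nat) linarith
  then show "real (cf_digit \<alpha> (Suc k)) = 1 / gauss_orbit \<alpha> k - gauss_orbit \<alpha> (Suc k)"
    unfolding digit gauss_orbit_Suc frac_def by simp
  show "cf_digit \<alpha> (Suc k) \<ge> 1" unfolding digit using floor by linarith
qed

lemma cf_error_eq_prod: "cf_error \<alpha> n = (-1) ^ n * (\<Prod>k\<le>n. gauss_orbit \<alpha> k)"
proof -
  have "cf_error \<alpha> n = (-1) ^ n * (\<Prod>k\<le>n. gauss_orbit \<alpha> k) \<and>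
      cf_error \<alpha> (Suc n) = (-1) ^ Suc n * (\<Prod>k\<le>Suc n. gauss_orbit \<alpha> k)"
  proof (induction n)
    case 0
    have "real (cf_digit \<alpha> 1) * \<alpha> - 1 = - (gauss_orbit \<alpha> 0 * gauss_orbit \<alpha> 1)"
      using cf_digit_Suc[of 0] \<alpha> by (simp add: gauss_orbit_def field_simps)
    then show ?case by (simp add: cf_error_def gauss_orbit_def)
  next
    case (Suc n)
    have "cf_error \<alpha> (Suc (Suc n)) = real (cf_digit \<alpha> (Suc (Suc n))) * cf_error \<alpha> (Suc n) + cf_error \<alpha> n"
      unfolding cf_error_def by (simp add: algebra_simps)
    also have "\<dots> = (-1) ^ n * (\<Prod>k\<le>n. gauss_orbit \<alpha> k)
        * (1 - real (cf_digit \<alpha> (Suc (Suc n))) * gauss_orbit \<alpha> (Suc n))"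
      using Suc.IH by (simp add: algebra_simps)
    also have "real (cf_digit \<alpha> (Suc (Suc n))) * gauss_orbit \<alpha> (Suc n)
        = 1 - gauss_orbit \<alpha> (Suc n) * gauss_orbit \<alpha> (Suc (Suc n))"
      using cf_digit_Suc[of "Suc n"] gauss_orbit_bounds(1)[of "Suc n"] by (simp add: field_simps)
    finally show ?case using Suc.IH by (simp add: algebra_simps)
  qed
  then show ?thesis by simp
qed

lemma prod_gauss_orbit_pos: "0 < (\<Prod>k\<le>n. gauss_orbit \<alpha> k)"
  using gauss_orbit_bounds by (intro prod_pos) (auto intro: less_imp_le)

lemma abs_cf_error: "\<bar>cf_error \<alpha> n\<bar> = (\<Prod>k\<le>n. gauss_orbit \<alpha> k)"
  using cf_error_eq_prod[of n] prod_gauss_orbit_pos[of n] by (simp add: abs_mult)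

lemma cf_denom_ge_1: "cf_denom \<alpha> n \<ge> 1"
proof -
  have "cf_denom \<alpha> n \<ge> 1 \<and> cf_denom \<alpha> (Suc n) \<ge> 1"
    by (induction n) (use cf_digit_ge_1[of 0] in simp_all)
  then show ?thesis by simp
qed

lemma cf_denom_le_Suc: "cf_denom \<alpha> n \<le> cf_denom \<alpha> (Suc n)"
  using cf_denom_Suc_ge[of \<alpha> n] cf_digit_ge_1[of n] by (metis le_trans mult_le_mono1 mult_1)

lemma cf_denom_Suc_le: "cf_denom \<alpha> (Suc n) \<le> (cf_digit \<alpha> (Suc n) + 1) * cf_denom \<alpha> n"
  by (cases n) (use cf_denom_le_Suc in simp_all)

lemma cf_denom_SucSuc_ge: "cf_denom \<alpha> (Suc (Suc n)) \<ge> cf_denom \<alpha> (Suc n) + cf_denom \<alpha> n"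
  using cf_digit_ge_1[of "Suc n"] by simp

lemma coprime_cf_denom: "coprime (cf_denom \<alpha> n) (cf_denom \<alpha> (Suc n))"
proof -
  have "coprime (int (cf_denom \<alpha> n)) (int (cf_denom \<alpha> (Suc n)))"
  proof (rule coprimeI)
    fix d assume "d dvd int (cf_denom \<alpha> n)" "d dvd int (cf_denom \<alpha> (Suc n))"
    then have "d dvd (-1) ^ n" unfolding cf_det[of \<alpha> n, symmetric] by (intro dvd_diff dvd_mult2)
    then show "is_unit d" by (rule dvd_unit_imp_unit) simp
  qed
  then show ?thesis by simp
qed

lemma cf_denom_mult_error_lt_1: "real (cf_denom \<alpha> (Suc n)) * \<bar>cf_error \<alpha> n\<bar> < 1"
proof -
  have "real (cf_denom \<alpha> (Suc n)) * cf_error \<alpha> n - real (cf_denom \<alpha> n) * cf_error \<alpha> (Suc n) = (-1) ^ n"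
    using arg_cong[OF cf_det[of \<alpha> n], of real_of_int] unfolding cf_error_def by (simp add: algebra_simps)
  then have "real (cf_denom \<alpha> (Suc n)) * \<bar>cf_error \<alpha> n\<bar>
      + real (cf_denom \<alpha> n) * \<bar>cf_error \<alpha> (Suc n)\<bar> = 1"
    unfolding abs_cf_error unfolding cf_error_eq_prod
    by (cases "even n") (simp_all add: algebra_simps)
  moreover have "0 < real (cf_denom \<alpha> n) * \<bar>cf_error \<alpha> (Suc n)\<bar>"
    using cf_denom_ge_1[of n] prod_gauss_orbit_pos[of "Suc n"] by (simp add: abs_cf_error)
  ultimately show ?thesis by linarith
qed

lemma abs_saw_sum_cf_le:
  "N < cf_denom \<alpha> (Suc m) \<Longrightarrow>
    \<bar>saw_sum (real (cf_denom \<alpha> m) / real (cf_denom \<alpha> (Suc m))) N\<bar> \<le> cf_saw_bound \<alpha> (Suc m)"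
proof (induction m arbitrary: N)
  case 0
  define q where "q = cf_denom \<alpha> 1"
  have "\<bar>saw_sum (real 1 / real q) N + (real 1 / real q) * saw_sum (real 0 / real 1) (N * 1 div q)\<bar>
        \<le> 14 + ln (real q / real 1)"
    by (rule saw_sum_reciprocity[where a = q]) (use 0 cf_denom_ge_1[of 1] in \<open>auto simp: q_def\<close>)
  then show ?case using 0 by (simp add: saw_sum_def q_def)
next
  case (Suc m)
  define s where "s = cf_denom \<alpha> (Suc m)"
  define Q where "Q = cf_denom \<alpha> (Suc (Suc m))"
  define K where "K = N * s div Q"
  define G where "G = saw_sum (real (cf_denom \<alpha> m) / real s) K"
  have s: "s \<ge> 1" "s \<le> Q" and cop: "coprime s Q"
    unfolding s_def Q_def by (rule cf_denom_ge_1 cf_denom_le_Suc coprime_cf_denom)+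
  have Q: "Q = cf_digit \<alpha> (Suc (Suc m)) * s + cf_denom \<alpha> m" unfolding Q_def s_def by simp
  have N: "N < Q" using Suc.prems unfolding Q_def .
  then have "K < s" unfolding K_def using s by (simp add: div_less_iff_less_mult)
  then have IH: "\<bar>G\<bar> \<le> cf_saw_bound \<alpha> (Suc m)" unfolding G_def s_def by (rule Suc.IH)
  have "\<bar>(real s / real Q) * G\<bar> \<le> (real s / real Q) * cf_saw_bound \<alpha> (Suc m)"
    using mult_left_mono[OF IH, of "real s / real Q"] by (simp add: abs_mult)
  moreover have "\<bar>saw_sum (real s / real Q) N + (real s / real Q) * G\<bar> \<le> 14 + ln (real Q / real s)"
    unfolding K_def G_def by (rule saw_sum_reciprocity[OF s(1) cop Q s(2) N])
  moreover have "\<bar>saw_sum (real s / real Q) N\<bar>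
      \<le> \<bar>(real s / real Q) * G\<bar> + \<bar>saw_sum (real s / real Q) N + (real s / real Q) * G\<bar>"
    using abs_triangle_ineq[of "- (real s / real Q) * G" "saw_sum (real s / real Q) N + (real s / real Q) * G"]
    by simp
  ultimately have "\<bar>saw_sum (real s / real Q) N\<bar>
      \<le> (real s / real Q) * cf_saw_bound \<alpha> (Suc m) + (14 + ln (real Q / real s))"
    by (meson add_mono order_trans)
  then show ?case unfolding s_def Q_def by (simp add: add.assoc)
qed

lemma cf_saw_bound_le_sum:
  "real (cf_denom \<alpha> m) * cf_saw_bound \<alpha> m
    \<le> 15 * (\<Sum>i<m. real (cf_denom \<alpha> (Suc i)) * real (cf_digit \<alpha> (Suc i)))"
proof (induction m)
  case (Suc m)
  have denom: "real (cf_denom \<alpha> m) \<ge> 1" "real (cf_denom \<alpha> (Suc m)) \<ge> 1" using cf_denom_ge_1 by simp_all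
  have digit: "real (cf_digit \<alpha> (Suc m)) \<ge> 1" using cf_digit_ge_1[of m] by simp
  have "real (cf_denom \<alpha> (Suc m)) \<le> (real (cf_digit \<alpha> (Suc m)) + 1) * real (cf_denom \<alpha> m)"
    using cf_denom_Suc_le[of m] by (metis of_nat_1 of_nat_add of_nat_le_iff of_nat_mult)
  then have "real (cf_denom \<alpha> (Suc m)) / real (cf_denom \<alpha> m) - 1 \<le> real (cf_digit \<alpha> (Suc m))"
    using denom by (simp add: field_simps)
  then have "ln (real (cf_denom \<alpha> (Suc m)) / real (cf_denom \<alpha> m)) \<le> real (cf_digit \<alpha> (Suc m))"
    using ln_le_minus_one[of "real (cf_denom \<alpha> (Suc m)) / real (cf_denom \<alpha> m)"] denom by simp
  then have "real (cf_denom \<alpha> (Suc m)) * (14 + ln (real (cf_denom \<alpha> (Suc m)) / real (cf_denom \<alpha> m)))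
      \<le> 15 * (real (cf_denom \<alpha> (Suc m)) * real (cf_digit \<alpha> (Suc m)))"
    using digit denom by (simp add: mult_left_mono)
  moreover have "real (cf_denom \<alpha> (Suc m)) * cf_saw_bound \<alpha> (Suc m) = real (cf_denom \<alpha> m) * cf_saw_bound \<alpha> m
      + real (cf_denom \<alpha> (Suc m)) * (14 + ln (real (cf_denom \<alpha> (Suc m)) / real (cf_denom \<alpha> m)))"
    using denom by (simp add: field_simps)
  ultimately show ?case using Suc.IH by (simp add: distrib_left)
qed simp

lemma sum_cf_denom_le: "(\<Sum>i\<le>n. real (cf_denom \<alpha> i)) \<le> real (cf_denom \<alpha> n) + real (cf_denom \<alpha> (Suc n))"
proof (induction n)
  case (Suc n)
  have "real (cf_denom \<alpha> (Suc n)) + real (cf_denom \<alpha> n) \<le> real (cf_denom \<alpha> (Suc (Suc n)))"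
    using cf_denom_SucSuc_ge[of n] by (metis of_nat_add of_nat_le_iff)
  then show ?case using Suc by simp
qed simp

lemma cf_saw_bound_le_if_dominated:
  fixes M :: nat
  assumes dominated: "\<And>i. i \<le> m \<Longrightarrow> cf_digit \<alpha> (Suc i) \<le> M * cf_digit \<alpha> (Suc (Suc m))"
  shows "real (cf_denom \<alpha> (Suc m)) * cf_saw_bound \<alpha> (Suc m) \<le> 45 * real M * real (cf_denom \<alpha> (Suc (Suc m)))"
proof -
  have sum_q: "(\<Sum>i<Suc m. real (cf_denom \<alpha> (Suc i))) \<le> 3 * real (cf_denom \<alpha> (Suc m))"
  proof -
    have "(\<Sum>i<Suc m. real (cf_denom \<alpha> (Suc i))) \<le> (\<Sum>i\<le>Suc m. real (cf_denom \<alpha> i))"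
      unfolding sum.atMost_Suc_shift lessThan_Suc_atMost by simp
    also have "\<dots> \<le> 3 * real (cf_denom \<alpha> (Suc m))"
      using sum_cf_denom_le[of m] cf_denom_le_Suc[of m] by simp
    finally show ?thesis .
  qed
  have next_q: "real (cf_digit \<alpha> (Suc (Suc m))) * real (cf_denom \<alpha> (Suc m)) \<le> real (cf_denom \<alpha> (Suc (Suc m)))"
    using cf_denom_Suc_ge[of \<alpha> "Suc m"] by (metis of_nat_le_iff of_nat_mult)
  have "(\<Sum>i<Suc m. real (cf_denom \<alpha> (Suc i)) * real (cf_digit \<alpha> (Suc i)))
      \<le> (\<Sum>i<Suc m. real (cf_denom \<alpha> (Suc i))) * (real M * real (cf_digit \<alpha> (Suc (Suc m))))"
    unfolding sum_distrib_right using dominated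
    by (intro sum_mono mult_left_mono) (auto simp flip: of_nat_mult)
  also have "\<dots> \<le> 3 * real (cf_denom \<alpha> (Suc m)) * (real M * real (cf_digit \<alpha> (Suc (Suc m))))"
    by (rule mult_right_mono[OF sum_q]) simp
  also have "\<dots> = 3 * real M * (real (cf_digit \<alpha> (Suc (Suc m))) * real (cf_denom \<alpha> (Suc m)))" by (simp add: mult_ac)
  also have "\<dots> \<le> 3 * real M * real (cf_denom \<alpha> (Suc (Suc m)))" by (rule mult_left_mono[OF next_q]) simp
  finally have "(\<Sum>i<Suc m. real (cf_denom \<alpha> (Suc i)) * real (cf_digit \<alpha> (Suc i)))
      \<le> 3 * real M * real (cf_denom \<alpha> (Suc (Suc m)))" .
  then show ?thesis using cf_saw_bound_le_sum[of "Suc m"] by linarith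
qed

lemma ln_sudler_cf_denom_le:
  fixes M :: nat
  assumes dominated: "\<And>i. i \<le> m \<Longrightarrow> cf_digit \<alpha> (Suc i) \<le> M * cf_digit \<alpha> (Suc (Suc m))"
  shows "ln (sudler (cf_denom \<alpha> (Suc m)) \<alpha>) \<le> 20 + 90 * real M"
proof -
  define \<tau> where "\<tau> = \<bar>cf_error \<alpha> (Suc m)\<bar>"
  define e :: int where "e = (-1) ^ m"
  have \<tau>_eq: "\<tau> = (\<Prod>k\<le>Suc m. gauss_orbit \<alpha> k)" unfolding \<tau>_def by (rule abs_cf_error)
  then have \<tau>: "0 < \<tau>" by (simp only: prod_gauss_orbit_pos)
  have \<tau>_next: "real (cf_denom \<alpha> (Suc (Suc m))) * \<tau> < 1" unfolding \<tau>_def by (rule cf_denom_mult_error_lt_1)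
  then have \<tau>_q: "real (cf_denom \<alpha> (Suc m)) * \<tau> < 1"
    using cf_denom_le_Suc[of "Suc m"] \<tau> by (smt (verit) mult_right_mono of_nat_mono)
  have "cf_error \<alpha> (Suc m) = - of_int e * \<tau>"
    unfolding \<tau>_eq cf_error_eq_prod e_def by simp
  then have approx: "real (cf_denom \<alpha> (Suc m)) * \<alpha> - of_int (int (cf_num \<alpha> (Suc m))) = - of_int e * \<tau>"
    by (simp add: cf_error_def)
  have "ln (sudler (cf_denom \<alpha> (Suc m)) \<alpha>)
      \<le> 20 + 2 * \<tau> * real (cf_denom \<alpha> (Suc m))
             * \<bar>saw_sum (real (cf_denom \<alpha> m) / real (cf_denom \<alpha> (Suc m))) (cf_denom \<alpha> (Suc m) - 1)\<bar>"
    by (rule ln_sudler_le_saw_sum[OF cf_denom_ge_1 coprime_cf_denom cf_det[of \<alpha> m, folded e_def] _ approx \<tau> \<tau>_q])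
       (simp add: e_def minus_one_power_iff)
  also have "\<dots> \<le> 20 + 2 * \<tau> * (real (cf_denom \<alpha> (Suc m)) * cf_saw_bound \<alpha> (Suc m))"
    using abs_saw_sum_cf_le[of "cf_denom \<alpha> (Suc m) - 1" m] cf_denom_ge_1[of "Suc m"] \<tau>
    by (simp add: mult_left_mono del: cf_saw_bound.simps)
  also have "\<dots> \<le> 20 + 2 * \<tau> * (45 * real M * real (cf_denom \<alpha> (Suc (Suc m))))"
    using cf_saw_bound_le_if_dominated[OF dominated] \<tau> by (intro add_left_mono mult_left_mono) auto
  also have "\<dots> = 20 + 90 * real M * (real (cf_denom \<alpha> (Suc (Suc m))) * \<tau>)" by (simp add: mult_ac)
  also have "\<dots> \<le> 20 + 90 * real M" using \<tau>_next by (simp add: mult_left_le)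
  finally show ?thesis .
qed

lemma sudler_cf_denom_le_if_dominated:
  fixes M :: nat
  assumes "\<And>i. i \<le> m \<Longrightarrow> cf_digit \<alpha> (Suc i) \<le> M * cf_digit \<alpha> (Suc (Suc m))"
  shows "sudler (cf_denom \<alpha> (Suc m)) \<alpha> \<le> exp (20 + 90 * real M)"
  using le_exp_if_ln_le[OF sudler_nonneg ln_sudler_cf_denom_le[OF assms]] .

end

lemma infinite_dominated_indices:
  fixes f :: "nat \<Rightarrow> nat"
  assumes pos: "\<And>k. f k \<ge> 1"
  shows "\<exists>M. infinite {m. \<forall>i\<le>m. f i \<le> M * f (Suc m)}"
proof (cases "\<exists>B. \<forall>i. f i \<le> B")
  case True
  then obtain B where B: "\<And>i. f i \<le> B" by blast
  have "f i \<le> B * f (Suc m)" for i m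
    using B[of i] pos[of "Suc m"] by (metis le_trans mult.right_neutral mult_le_mono2)
  then show ?thesis by (intro exI[of _ B]) simp
next
  case False
  have "infinite {m. \<forall>i\<le>m. f i \<le> 1 * f (Suc m)}"
    unfolding infinite_nat_iff_unbounded_le
  proof
    fix N
    define A where "A = Max (f ` {..N})"
    define k where "k = (LEAST k. A < f k)"
    obtain i where "A < f i" using False by (meson not_le)
    then have k: "A < f k" unfolding k_def by (rule LeastI)
    have below: "f j \<le> A" if "j < k" for j
      using not_less_Least[of j "\<lambda>k. A < f k"] that unfolding k_def by simp
    have "N < k"
    proof (rule ccontr)
      assume "\<not> N < k"
      then have "f k \<le> A" unfolding A_def by (intro Max_ge) auto
      then show False using k by simp
    qed
    then obtain m where m: "k = Suc m" "N \<le> m" by (cases k) auto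
    have "\<forall>i\<le>m. f i \<le> 1 * f (Suc m)"
    proof (intro allI impI)
      fix i assume "i \<le> m"
      then have "f i \<le> A" using below m(1) by simp
      then show "f i \<le> 1 * f (Suc m)" using k m(1) by simp
    qed
    then show "\<exists>m\<ge>N. m \<in> {m. \<forall>i\<le>m. f i \<le> 1 * f (Suc m)}" using m by blast
  qed
  then show ?thesis by blast
qed

theorem corollary1p4:
  fixes \<alpha> :: real
  assumes "0 < \<alpha>" and "\<alpha> < 1" and "\<alpha> \<notin> \<rat>"
  shows "\<exists>r. strict_mono r \<and> convergent (\<lambda>n. sudler (cf_denom \<alpha> (r n)) \<alpha>)"
proof -
  define S where "S M = {m. \<forall>i\<le>m. cf_digit \<alpha> (Suc i) \<le> M * cf_digit \<alpha> (Suc (Suc m))}" for M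
  obtain M where "infinite (S M)"
    using infinite_dominated_indices[of "\<lambda>i. cf_digit \<alpha> (Suc i)", OF cf_digit_ge_1[OF assms]]
    unfolding S_def by blast
  from infinite_enumerate[OF this] obtain r :: "nat \<Rightarrow> nat" where r: "strict_mono r" "\<And>n. r n \<in> S M" by blast
  then have dominated: "\<And>n i. i \<le> r n \<Longrightarrow> cf_digit \<alpha> (Suc i) \<le> M * cf_digit \<alpha> (Suc (Suc (r n)))"
    unfolding S_def by blast
  define y where "y n = sudler (cf_denom \<alpha> (Suc (r n))) \<alpha>" for n
  have "bounded (range y)"
    using sudler_nonneg sudler_cf_denom_le_if_dominated[OF assms dominated]
    by (intro boundedI) (auto simp: y_def)
  then obtain l f where f: "strict_mono f" "(y \<circ> f) \<longlonglongrightarrow> l"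
    using bounded_imp_convergent_subsequence by blast
  have "strict_mono (\<lambda>n. Suc (r (f n)))"
    using r(1) f(1) by (simp add: strict_mono_def)
  moreover have "convergent (\<lambda>n. sudler (cf_denom \<alpha> (Suc (r (f n)))) \<alpha>)"
    using f(2) unfolding y_def comp_def convergent_def by blast
  ultimately show ?thesis by blast
qed

end
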